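(* Let $X$ and $Y$ be Banach spaces over $\mathbb{K}\in\{\mathbb{R},\mathbb{C}\}$, $\Gamma$ an arbitrary set, $E$ an invariant sequence space over $X$, and for each $\lambda\in\Gamma$ let $E_\lambda$ be a strongly invariant sequence space over $Y$. Suppose $f\colon X\to Y$ is compatible with $E_\lambda$ for every $\lambda\in\Gamma$, and that the family $(E_\lambda)_{\lambda\in\Gamma}$ is nested. Then the set $$G\big(E,f,(E_\lambda)_{\lambda\in\Gamma}\big)=\Big\{(x_j)_{j=1}^\infty\in E:\ (f(x_j))_{j=1}^\infty\notin\bigcup_{\lambda\in\Gamma}E_\lambda\Big\}$$ is either empty or pointwise $\mathfrak{c}$-spaceable in $E$; i.e., if it is nonempty, then for every $x\in G(E,f,(E_\lambda)_{\lambda\in\Gamma})$ there is a closed linear subspace $W_x$ of $E$ with $\dim W_x=\mathfrak{c}$ and $x\in W_x\subset G(E,f,(E_\lambda)_{\lambda\in\Gamma})\cup\{0\}$.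
   Context: $\mathfrak{c}=\operatorname{card}(\mathbb{R})$. Zero-free version: for $x=(x_j)_{j=1}^\infty\in Z^{\mathbb{N}}$ ($Z$ a Banach space), if $x$ has only finitely many nonzero coordinates then $x^0=0$; otherwise $x^0=(x_{j_k})_{k=1}^\infty$ where $x_{j_k}$ is the $k$-th nonzero coordinate of $x$. An invariant sequence space over a Banach space $Z\neq\{0\}$ is an infinite-dimensional Banach or quasi-Banach space $E$ which is a linear subspace of $Z^{\mathbb{N}}$ (coordinatewise operations) such that: (b1) there is a constant $K$ depending only on $E$ such that for all $x\in Z^{\mathbb{N}}$ with $x^0\neq0$, $x\in E\iff x^0\in E$, and $\|x\|_E\le K\|x^0\|_E$; (b2) $\|x_j\|_Z\le\|x\|_E$ for all $x=(x_j)\in E$ and all $j$. A strongly invariant sequence space over $Z$ is an invariant sequence space $E$ over $Z$ such that $c_{00}(Z)=\{(x_j)\in Z^{\mathbb{N}}: x_j=0\text{ for all but finitely many }j\}\subset E$, and $(x_j)_{j=1}^\infty\in E$ if and only if every subsequence of $(x_j)_{j=1}^\infty$ belongs to $E$. If $E'$ is an invariant sequence space over $Y$, a function $f\colon X\to Y$ with $f(0)=0$ is compatible with $E'$ if for every $X$-valued sequence $(x_j)_{j=1}^\infty$ and every scalar $a\neq0$: $(f(x_j))_{j=1}^\infty\notin E'\Rightarrow (f(ax_j))_{j=1}^\infty\notin E'$. A family $(E_\lambda)_{\lambda\in\Gamma}$ is nested if for all $\lambda_1,\lambda_2\in\Gamma$, either $E_{\lambda_1}\subset E_{\lambda_2}$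 or $E_{\lambda_2}\subset E_{\lambda_1}$. *)

theory Defs
  imports "HOL-Analysis.Analysis" "HOL-Library.Equipollence" "HOL-Library.Infinite_Set" "HOL-Library.Function_Algebras"
begin

(* A Banach space over a scalar field 'k (in practice 'k = real or complex):
   a real Banach space 'a together with a 'k-scalar multiplication extending scaleR
   and satisfying norm (a x) = |a| norm x. *)
definition scalar_structure :: "('k::real_normed_field \<Rightarrow> 'a::banach \<Rightarrow> 'a) \<Rightarrow> bool" where
  "scalar_structure sc \<longleftrightarrow> vector_space sc \<and>
     (\<forall>r x. sc (of_real r) x = scaleR r x) \<and>
     (\<forall>a x. norm (sc a x) = norm a * norm x)"

definition seq_scale :: "('k \<Rightarrow> 'a \<Rightarrow> 'a) \<Rightarrow> 'k \<Rightarrow> (nat \<Rightarrow> 'a) \<Rightarrow> (nat \<Rightarrow> 'a)" where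
  "seq_scale sc a x = (\<lambda>j. sc a (x j))"

definition quasi_banach_seq ::
  "('k::real_normed_field \<Rightarrow> 'a::banach \<Rightarrow> 'a) \<Rightarrow> (nat \<Rightarrow> 'a) set \<Rightarrow> ((nat \<Rightarrow> 'a) \<Rightarrow> real) \<Rightarrow> bool" where
  "quasi_banach_seq sc E q \<longleftrightarrow>
     module.subspace (seq_scale sc) E \<and>
     (\<forall>x\<in>E. q x \<ge> 0 \<and> (q x = 0 \<longleftrightarrow> x = 0)) \<and>
     (\<forall>a. \<forall>x\<in>E. q (seq_scale sc a x) = norm a * q x) \<and>
     (\<exists>C\<ge>1. \<forall>x\<in>E. \<forall>y\<in>E. q (x + y) \<le> C * (q x + q y)) \<and>
     (\<forall>u. (\<forall>n. u n \<in> E) \<and> (\<forall>e>0. \<exists>N. \<forall>m\<ge>N. \<forall>n\<ge>N. q (u m - u n) < e) \<longrightarrow>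
          (\<exists>z\<in>E. (\<lambda>n. q (u n - z)) \<longlonglongrightarrow> 0))"

definition infinite_dim :: "('k::field \<Rightarrow> 'v::ab_group_add \<Rightarrow> 'v) \<Rightarrow> 'v set \<Rightarrow> bool" where
  "infinite_dim sc E \<longleftrightarrow> \<not> (\<exists>B. finite B \<and> B \<subseteq> E \<and> module.span sc B = E)"

(* zero-free version x^0 (indices start at 0) *)
definition zero_free :: "(nat \<Rightarrow> 'a::zero) \<Rightarrow> (nat \<Rightarrow> 'a)" where
  "zero_free x = (if finite {j. x j \<noteq> 0} then (\<lambda>_. 0)
                  else (\<lambda>k. x (enumerate {j. x j \<noteq> 0} k)))"

definition invariant_seq_space ::
  "('k::real_normed_field \<Rightarrow> 'a::banach \<Rightarrow> 'a) \<Rightarrow> (nat \<Rightarrow> 'a) set \<Rightarrow> ((nat \<Rightarrow> 'a) \<Rightarrow> real) \<Rightarrow> bool" where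
  "invariant_seq_space sc E q \<longleftrightarrow>
     (\<exists>z::'a. z \<noteq> 0) \<and>
     quasi_banach_seq sc E q \<and> infinite_dim (seq_scale sc) E \<and>
     (\<exists>K. \<forall>x. zero_free x \<noteq> 0 \<longrightarrow>
          (x \<in> E \<longleftrightarrow> zero_free x \<in> E) \<and> (x \<in> E \<longrightarrow> q x \<le> K * q (zero_free x))) \<and>
     (\<forall>x\<in>E. \<forall>j. norm (x j) \<le> q x)"

definition c00 :: "(nat \<Rightarrow> 'a::zero) set" where
  "c00 = {x. finite {j. x j \<noteq> 0}}"

definition strongly_invariant_seq_space ::
  "('k::real_normed_field \<Rightarrow> 'a::banach \<Rightarrow> 'a) \<Rightarrow> (nat \<Rightarrow> 'a) set \<Rightarrow> ((nat \<Rightarrow> 'a) \<Rightarrow> real) \<Rightarrow> bool" where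
  "strongly_invariant_seq_space sc E q \<longleftrightarrow>
     invariant_seq_space sc E q \<and> c00 \<subseteq> E \<and>
     (\<forall>x. x \<in> E \<longleftrightarrow> (\<forall>r. strict_mono r \<longrightarrow> x \<circ> r \<in> E))"

definition compatible ::
  "('k::zero \<Rightarrow> 'a::zero \<Rightarrow> 'a) \<Rightarrow> ('a \<Rightarrow> 'b::zero) \<Rightarrow> (nat \<Rightarrow> 'b) set \<Rightarrow> bool" where
  "compatible scX f E' \<longleftrightarrow> f 0 = 0 \<and>
     (\<forall>xs (a::'k). a \<noteq> 0 \<longrightarrow> (\<lambda>j. f (xs j)) \<notin> E' \<longrightarrow> (\<lambda>j. f (scX a (xs j))) \<notin> E')"

definition nested :: "'g set \<Rightarrow> ('g \<Rightarrow> 'c set) \<Rightarrow> bool" where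
  "nested \<Gamma> Es \<longleftrightarrow> (\<forall>l1\<in>\<Gamma>. \<forall>l2\<in>\<Gamma>. Es l1 \<subseteq> Es l2 \<or> Es l2 \<subseteq> Es l1)"

definition G_set ::
  "(nat \<Rightarrow> 'a) set \<Rightarrow> ('a \<Rightarrow> 'b) \<Rightarrow> 'g set \<Rightarrow> ('g \<Rightarrow> (nat \<Rightarrow> 'b) set) \<Rightarrow> (nat \<Rightarrow> 'a) set" where
  "G_set E f \<Gamma> Es = {x \<in> E. (\<lambda>j. f (x j)) \<notin> (\<Union>l\<in>\<Gamma>. Es l)}"

(* W is closed in (E, q) (sequential closedness w.r.t. the metrizable quasi-norm topology) *)
definition closed_in_qnorm :: "(nat \<Rightarrow> 'a) set \<Rightarrow> ((nat \<Rightarrow> 'a) \<Rightarrow> real) \<Rightarrow> (nat \<Rightarrow> 'a::ab_group_add) set \<Rightarrow> bool" where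
  "closed_in_qnorm E q W \<longleftrightarrow>
     (\<forall>u z. (\<forall>n. u n \<in> W) \<and> z \<in> E \<and> (\<lambda>n. q (u n - z)) \<longlonglongrightarrow> 0 \<longrightarrow> z \<in> W)"

definition dim_continuum :: "('k::field \<Rightarrow> 'v::ab_group_add \<Rightarrow> 'v) \<Rightarrow> 'v set \<Rightarrow> bool" where
  "dim_continuum sc W \<longleftrightarrow>
     (\<exists>B. \<not> module.dependent sc B \<and> module.span sc B = W \<and> B \<approx> (UNIV :: real set))"

definition pointwise_c_spaceable ::
  "('k::real_normed_field \<Rightarrow> 'a::banach \<Rightarrow> 'a) \<Rightarrow> (nat \<Rightarrow> 'a) set \<Rightarrow> ((nat \<Rightarrow> 'a) \<Rightarrow> real)
     \<Rightarrow> (nat \<Rightarrow> 'a) set \<Rightarrow> bool" where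
  "pointwise_c_spaceable sc E q A \<longleftrightarrow>
     (\<forall>x\<in>A. \<exists>W. W \<subseteq> E \<and> module.subspace (seq_scale sc) W \<and> closed_in_qnorm E q W \<and>
               dim_continuum (seq_scale sc) W \<and> x \<in> W \<and> W \<subseteq> A \<union> {0})"

end

theory Submission
  imports Defs
begin

text \<open>Let \<open>x \<in> G\<close>. As \<open>f \<circ> x\<close> escapes every \<open>E\<^sub>\<lambda> \<supseteq> c\<^sub>0\<^sub>0\<close>, \<open>x\<close> has infinite support.
  Split the support into two interleaved halves: by nestedness and strong invariance, \<open>f \<circ> x\<close>
  escapes every \<open>E\<^sub>\<lambda>\<close> already along one half \<open>\<tau>\<close>. Split the other half into infinitely many
  disjoint subsequences \<open>\<nu> i\<close> and let \<open>copy i\<close> carry the nonzero coordinates of \<open>x\<close> along \<open>\<nu> i\<close>;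
  it has the same zero-free version as \<open>x\<close>, so it lies in \<open>E\<close>. A sequence that equals \<open>b x\<close> off
  the \<open>\<nu> i\<close> and \<open>b x + a\<^sub>i (x \<circ> \<sigma>)\<close> along \<open>\<nu> i\<close> (\<open>\<sigma>\<close> enumerating the support) is, if nonzero,
  kept out of every \<open>E\<^sub>\<lambda>\<close> by compatibility of \<open>f\<close>: along \<open>\<tau>\<close> if \<open>b \<noteq> 0\<close>, along some \<open>\<nu> i\<close> with
  \<open>a\<^sub>i \<noteq> 0\<close> otherwise. These sequences form a closed subspace containing the closed span of the
  independent sequence \<open>x, copy 0, copy 1, \<dots>\<close>, and such a closed span has dimension continuum: for
  suitably fast decaying weights \<open>\<epsilon>\<^sub>k\<close> the sums \<open>\<Sum>\<^sub>k \<epsilon>\<^sub>k t\<^sup>k g\<^sub>k\<close>, \<open>0 < t < 1\<close>, are linearly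
  independent, while the closure of a countably spanned space has at most continuum many elements.\<close>

section \<open>Quasi-Banach sequence spaces\<close>

lemma vector_space_seq_scale:
  assumes "scalar_structure sc"
  shows "vector_space (seq_scale sc)"
proof -
  interpret vector_space sc using assms by (simp add: scalar_structure_def)
  show ?thesis unfolding vector_space_def module_def seq_scale_def
    by (simp add: fun_eq_iff scale_right_distrib scale_left_distrib)
qed

lemma seq_scale_apply: "seq_scale sc a x j = sc a (x j)"
  by (simp add: seq_scale_def)

lemma nonneg_le_tendsto_0:
  fixes f g :: "nat \<Rightarrow> real"
  assumes "\<And>n. 0 \<le> f n" "\<And>n. f n \<le> g n" "g \<longlonglongrightarrow> 0"
  shows "f \<longlonglongrightarrow> 0"
  by (rule Lim_null_comparison[OF _ assms(3)]) (use assms in auto)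

locale quasi_banach_seq_space =
  fixes sc :: "'k::{real_normed_field,euclidean_space} \<Rightarrow> 'a::banach \<Rightarrow> 'a"
    and E :: "(nat \<Rightarrow> 'a) set" and q :: "(nat \<Rightarrow> 'a) \<Rightarrow> real"
  assumes scalar_structure: "scalar_structure sc"
    and quasi_banach: "quasi_banach_seq sc E q"
begin

lemma norm_scale: "norm (sc a v) = norm a * norm v"
  using scalar_structure by (simp add: scalar_structure_def)

sublocale S: vector_space sc
  using scalar_structure by (simp add: scalar_structure_def)

sublocale V: vector_space "seq_scale sc"
  by (rule vector_space_seq_scale[OF scalar_structure])

lemma subspace_E: "V.subspace E"
  and q_nonneg: "x \<in> E \<Longrightarrow> 0 \<le> q x"
  and q_eq_0_iff: "x \<in> E \<Longrightarrow> q x = 0 \<longleftrightarrow> x = 0"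
  and q_scale: "x \<in> E \<Longrightarrow> q (seq_scale sc a x) = norm a * q x"
  and q_complete: "\<lbrakk>\<forall>n. u n \<in> E; \<forall>e>0. \<exists>N. \<forall>m\<ge>N. \<forall>n\<ge>N. q (u m - u n) < e\<rbrakk>
     \<Longrightarrow> \<exists>z\<in>E. (\<lambda>n. q (u n - z)) \<longlonglongrightarrow> 0"
  using quasi_banach by (simp_all add: quasi_banach_seq_def)

definition qconst :: real where
  "qconst = (SOME C. C \<ge> 1 \<and> (\<forall>x\<in>E. \<forall>y\<in>E. q (x + y) \<le> C * (q x + q y)))"

lemma qconst: "qconst \<ge> 1 \<and> (\<forall>x\<in>E. \<forall>y\<in>E. q (x + y) \<le> qconst * (q x + q y))"
  unfolding qconst_def
  by (rule someI_ex) (use quasi_banach in \<open>simp add: quasi_banach_seq_def\<close>)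

lemma qconst_ge_1: "qconst \<ge> 1"
  and q_triangle: "x \<in> E \<Longrightarrow> y \<in> E \<Longrightarrow> q (x + y) \<le> qconst * (q x + q y)"
  using qconst by auto

lemma E_zero: "0 \<in> E"
  using subspace_E V.subspace_0 by blast

lemma E_add: "x \<in> E \<Longrightarrow> y \<in> E \<Longrightarrow> x + y \<in> E"
  using subspace_E V.subspace_add by blast

lemma E_diff: "x \<in> E \<Longrightarrow> y \<in> E \<Longrightarrow> x - y \<in> E"
  using subspace_E V.subspace_diff by blast

lemma E_scale: "x \<in> E \<Longrightarrow> seq_scale sc a x \<in> E"
  using subspace_E V.subspace_scale by blast

lemma E_sum: "(\<And>i. i \<in> A \<Longrightarrow> F i \<in> E) \<Longrightarrow> sum F A \<in> E"
  using subspace_E V.subspace_sum by blast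

lemma span_subset_E: "S \<subseteq> E \<Longrightarrow> V.span S \<subseteq> E"
  using subspace_E V.span_minimal by blast

lemma q_zero: "q 0 = 0"
  by (simp add: q_eq_0_iff E_zero)

lemma q_uminus: "x \<in> E \<Longrightarrow> q (- x) = q x"
proof -
  assume x: "x \<in> E"
  have "- x = seq_scale sc (-1) x" by (simp add: V.scale_minus_left)
  then show ?thesis using q_scale[OF x, of "-1"] by simp
qed

lemma q_diff_commute: "x \<in> E \<Longrightarrow> y \<in> E \<Longrightarrow> q (x - y) = q (y - x)"
  by (metis E_diff minus_diff_eq q_uminus)

lemma q_triangle_diff:
  "x \<in> E \<Longrightarrow> y \<in> E \<Longrightarrow> z \<in> E \<Longrightarrow> q (x - z) \<le> qconst * (q (x - y) + q (y - z))"
proof -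
  assume a: "x \<in> E" "y \<in> E" "z \<in> E"
  have "x - z = (x - y) + (y - z)" by simp
  then show ?thesis using q_triangle[of "x - y" "y - z"] a E_diff by simp
qed

lemma q_sum_le:
  assumes "\<And>k. v k \<in> E"
  shows "q (\<Sum>k\<in>{m..<m+L}. v k) \<le> (\<Sum>k\<in>{m..<m+L}. qconst ^ (k - m + 1) * q (v k))"
proof (induction L arbitrary: m)
  case 0
  then show ?case using q_zero by (simp add: zero_fun_def)
next
  case (Suc L)
  have split: "{m..<m + Suc L} = insert m {Suc m..<Suc m + L}" by auto
  have A: "(\<Sum>k\<in>{m..<m + Suc L}. v k) = v m + (\<Sum>k\<in>{Suc m..<Suc m + L}. v k)"
    unfolding split by simp
  have B: "(\<Sum>k\<in>{m..<m + Suc L}. qconst ^ (k - m + 1) * q (v k)) =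
      qconst * q (v m) + (\<Sum>k\<in>{Suc m..<Suc m + L}. qconst ^ (k - m + 1) * q (v k))"
    unfolding split by simp
  have C: "(\<Sum>k\<in>{Suc m..<Suc m + L}. qconst ^ (k - m + 1) * q (v k)) =
       qconst * (\<Sum>k\<in>{Suc m..<Suc m + L}. qconst ^ (k - Suc m + 1) * q (v k))"
    unfolding sum_distrib_left by (rule sum.cong) (auto simp: Suc_diff_Suc)
  have "q (\<Sum>k\<in>{m..<m + Suc L}. v k) \<le> qconst * (q (v m) + q (\<Sum>k\<in>{Suc m..<Suc m + L}. v k))"
    unfolding A by (rule q_triangle[OF assms E_sum]) (rule assms)
  also have "\<dots> \<le> qconst * (q (v m) + (\<Sum>k\<in>{Suc m..<Suc m + L}. qconst ^ (k - Suc m + 1) * q (v k)))"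
    using Suc.IH[of "Suc m"] qconst_ge_1 by (intro mult_left_mono) auto
  also have "\<dots> = (\<Sum>k\<in>{m..<m + Suc L}. qconst ^ (k - m + 1) * q (v k))"
    unfolding B C by (simp add: algebra_simps)
  finally show ?case .
qed

lemma subspace_proportional: "V.subspace {y. \<exists>b. \<forall>j\<in>J. y j = sc b (x j)}"
proof (rule V.subspaceI)
  show "0 \<in> {y. \<exists>b. \<forall>j\<in>J. y j = sc b (x j)}" by (auto intro: exI[of _ 0] simp: S.scale_zero_left)
next
  fix y y' assume "y \<in> {y. \<exists>b. \<forall>j\<in>J. y j = sc b (x j)}" "y' \<in> {y. \<exists>b. \<forall>j\<in>J. y j = sc b (x j)}"
  then obtain b b' where "\<forall>j\<in>J. y j = sc b (x j)" "\<forall>j\<in>J. y' j = sc b' (x j)" by blast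
  thus "y + y' \<in> {y. \<exists>b. \<forall>j\<in>J. y j = sc b (x j)}"
    by (intro CollectI exI[of _ "b + b'"]) (simp add: S.scale_left_distrib)
next
  fix c y assume "y \<in> {y. \<exists>b. \<forall>j\<in>J. y j = sc b (x j)}"
  then obtain b where "\<forall>j\<in>J. y j = sc b (x j)" by blast
  thus "seq_scale sc c y \<in> {y. \<exists>b. \<forall>j\<in>J. y j = sc b (x j)}"
    by (intro CollectI exI[of _ "c * b"]) (simp add: seq_scale_apply)
qed

definition qconv :: "(nat \<Rightarrow> nat \<Rightarrow> 'a) \<Rightarrow> (nat \<Rightarrow> 'a) \<Rightarrow> bool" where
  "qconv u z \<longleftrightarrow> (\<forall>n. u n \<in> E) \<and> z \<in> E \<and> (\<lambda>n. q (u n - z)) \<longlonglongrightarrow> 0"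

lemma qconv_unique: "qconv u z \<Longrightarrow> qconv u w \<Longrightarrow> z = w"
proof -
  assume a: "qconv u z" "qconv u w"
  hence E: "\<And>n. u n \<in> E" "z \<in> E" "w \<in> E" by (auto simp: qconv_def)
  have le: "q (z - w) \<le> qconst * (q (u n - z) + q (u n - w))" for n
    using q_triangle_diff[OF E(2) E(1)[of n] E(3)] q_diff_commute[OF E(2) E(1)[of n]] by simp
  have "(\<lambda>n. qconst * (q (u n - z) + q (u n - w))) \<longlonglongrightarrow> 0"
    using a by (intro tendsto_mult_right_zero tendsto_add_zero) (auto simp: qconv_def)
  hence "q (z - w) \<le> 0"
    by (intro tendsto_le[OF _ _ tendsto_const]) (use le in auto)
  hence "q (z - w) = 0" using q_nonneg[OF E_diff[OF E(2,3)]] by simp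
  thus ?thesis using q_eq_0_iff[OF E_diff[OF E(2,3)]] by simp
qed

lemma qconv_add: "qconv u z \<Longrightarrow> qconv v w \<Longrightarrow> qconv (\<lambda>n. u n + v n) (z + w)"
proof -
  assume a: "qconv u z" "qconv v w"
  hence E: "\<And>n. u n \<in> E" "z \<in> E" "\<And>n. v n \<in> E" "w \<in> E" by (auto simp: qconv_def)
  have eq: "u n + v n - (z + w) = (u n - z) + (v n - w)" for n by simp
  have le: "q (u n + v n - (z + w)) \<le> qconst * (q (u n - z) + q (v n - w))" for n
    unfolding eq by (rule q_triangle) (use E E_diff in auto)
  have "(\<lambda>n. qconst * (q (u n - z) + q (v n - w))) \<longlonglongrightarrow> 0"
    using a by (intro tendsto_mult_right_zero tendsto_add_zero) (auto simp: qconv_def)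
  from nonneg_le_tendsto_0[OF _ le this]
  have "(\<lambda>n. q (u n + v n - (z + w))) \<longlonglongrightarrow> 0" by (simp add: q_nonneg E E_add E_diff)
  thus ?thesis using E E_add by (auto simp: qconv_def)
qed

lemma qconv_scale: "qconv u z \<Longrightarrow> qconv (\<lambda>n. seq_scale sc a (u n)) (seq_scale sc a z)"
proof -
  assume a: "qconv u z"
  hence E: "\<And>n. u n \<in> E" "z \<in> E" by (auto simp: qconv_def)
  have "q (seq_scale sc a (u n) - seq_scale sc a z) = norm a * q (u n - z)" for n
    unfolding V.scale_right_diff_distrib[symmetric] using q_scale[OF E_diff[OF E(1) E(2)]] .
  moreover have "(\<lambda>n. norm a * q (u n - z)) \<longlonglongrightarrow> 0"
    using a by (intro tendsto_mult_right_zero) (auto simp: qconv_def)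
  ultimately show ?thesis using E E_scale by (auto simp: qconv_def)
qed

lemma qconv_const: "z \<in> E \<Longrightarrow> qconv (\<lambda>n. z) z"
  by (simp add: qconv_def q_zero)

lemma qconv_sum:
  "finite A \<Longrightarrow> (\<And>i. i \<in> A \<Longrightarrow> qconv (u i) (z i)) \<Longrightarrow> qconv (\<lambda>n. \<Sum>i\<in>A. u i n) (\<Sum>i\<in>A. z i)"
proof (induction A rule: finite_induct)
  case empty
  then show ?case using qconv_const[OF E_zero] by (simp add: zero_fun_def)
next
  case (insert x F)
  show ?case unfolding sum.insert[OF insert(1,2)] by (rule qconv_add) (use insert in auto)
qed

lemma tendsto_scale_left: "b \<longlonglongrightarrow> \<beta> \<Longrightarrow> (\<lambda>n. sc (b n) w) \<longlonglongrightarrow> sc \<beta> w"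
proof -
  assume b: "b \<longlonglongrightarrow> \<beta>"
  have "(\<lambda>n. norm (b n - \<beta>) * norm w) \<longlonglongrightarrow> 0 * norm w"
    using b by (intro tendsto_intros) (simp add: tendsto_norm_zero_iff LIM_zero)
  hence "(\<lambda>n. norm (sc (b n) w - sc \<beta> w)) \<longlonglongrightarrow> 0"
    by (simp add: norm_scale S.scale_left_diff_distrib[symmetric])
  thus ?thesis by (simp add: LIM_zero_cancel tendsto_norm_zero_iff)
qed

lemma tendsto_scale_left_cancel:
  assumes v: "v \<noteq> 0" and w: "(\<lambda>n. sc (b n) v) \<longlonglongrightarrow> w"
  shows "\<exists>\<beta>. b \<longlonglongrightarrow> \<beta> \<and> w = sc \<beta> v"
proof -
  have C: "Cauchy (\<lambda>n. sc (b n) v)" using w convergent_Cauchy convergent_def by blast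
  have "Cauchy b"
  proof (rule CauchyI)
    fix e :: real assume e: "e > 0"
    have "e * norm v > 0" using e v by simp
    then obtain M where M: "\<forall>m\<ge>M. \<forall>n\<ge>M. norm (sc (b m) v - sc (b n) v) < e * norm v"
      using C unfolding Cauchy_iff by blast
    have "norm (b m - b n) < e" if "m \<ge> M" "n \<ge> M" for m n
    proof -
      have "norm (b m - b n) * norm v < e * norm v"
        using M that by (simp add: norm_scale S.scale_left_diff_distrib[symmetric])
      thus ?thesis using v by simp
    qed
    thus "\<exists>M. \<forall>m\<ge>M. \<forall>n\<ge>M. norm (b m - b n) < e" by blast
  qed
  then obtain \<beta> where \<beta>: "b \<longlonglongrightarrow> \<beta>" using Cauchy_convergent_iff convergent_def by blast
  have "w = sc \<beta> v" using w tendsto_scale_left[OF \<beta>] by (rule LIMSEQ_unique)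
  thus ?thesis using \<beta> by blast
qed

lemma q_scale_left_tendsto:
  assumes b: "b \<longlonglongrightarrow> \<beta>" and v: "v \<in> E"
  shows "(\<lambda>n. q (seq_scale sc (b n) v - seq_scale sc \<beta> v)) \<longlonglongrightarrow> 0"
proof -
  have eq: "seq_scale sc (b n) v - seq_scale sc \<beta> v = seq_scale sc (b n - \<beta>) v" for n
    by (simp add: V.scale_left_diff_distrib)
  have "(\<lambda>n. norm (b n - \<beta>) * q v) \<longlonglongrightarrow> 0 * q v"
    using b by (intro tendsto_intros) (simp add: tendsto_norm_zero_iff LIM_zero)
  thus ?thesis unfolding eq using q_scale[OF v] by simp
qed

end

section \<open>Closed subspaces\<close>

context quasi_banach_seq_space
begin

definition qclosure :: "(nat \<Rightarrow> 'a) set \<Rightarrow> (nat \<Rightarrow> 'a) set" where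
  "qclosure S = {y \<in> E. \<exists>u. (\<forall>n. u n \<in> S) \<and> (\<lambda>n. q (u n - y)) \<longlonglongrightarrow> 0}"

lemma qclosure_iff: "S \<subseteq> E \<Longrightarrow> y \<in> qclosure S \<longleftrightarrow> (\<exists>u. (\<forall>n. u n \<in> S) \<and> qconv u y)"
  unfolding qclosure_def qconv_def by blast

lemma qclosure_subset_E: "qclosure S \<subseteq> E"
  unfolding qclosure_def by blast

lemma subset_qclosure: "S \<subseteq> E \<Longrightarrow> S \<subseteq> qclosure S"
  unfolding qclosure_def using q_zero by auto

lemma qclosure_minimal: "closed_in_qnorm E q W \<Longrightarrow> S \<subseteq> W \<Longrightarrow> qclosure S \<subseteq> W"
  unfolding qclosure_def closed_in_qnorm_def by blast

lemma subspace_qclosure: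
  assumes S: "V.subspace S" "S \<subseteq> E"
  shows "V.subspace (qclosure S)"
proof (rule V.subspaceI)
  show "0 \<in> qclosure S" using subset_qclosure S V.subspace_0 by blast
next
  fix x y assume "x \<in> qclosure S" "y \<in> qclosure S"
  then obtain u v where "\<forall>n. u n \<in> S" "qconv u x" "\<forall>n. v n \<in> S" "qconv v y"
    using S(2) by (auto simp: qclosure_iff)
  thus "x + y \<in> qclosure S" using S
    by (auto simp: qclosure_iff intro!: exI[of _ "\<lambda>n. u n + v n"] qconv_add V.subspace_add)
next
  fix c x assume "x \<in> qclosure S"
  then obtain u where "\<forall>n. u n \<in> S" "qconv u x" using S(2) by (auto simp: qclosure_iff)
  thus "seq_scale sc c x \<in> qclosure S" using S
    by (auto simp: qclosure_iff intro!: exI[of _ "\<lambda>n. seq_scale sc c (u n)"] qconv_scale V.subspace_scale)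
qed

text \<open>A diagonal argument: approximate the \<open>n\<close>-th term within \<open>1/(n+1)\<close> by an element of \<open>S\<close>.\<close>

lemma closed_qclosure:
  assumes S: "S \<subseteq> E"
  shows "closed_in_qnorm E q (qclosure S)"
  unfolding closed_in_qnorm_def
proof (intro allI impI)
  fix w y assume a: "(\<forall>n. w n \<in> qclosure S) \<and> y \<in> E \<and> (\<lambda>n. q (w n - y)) \<longlonglongrightarrow> 0"
  have "\<exists>v. v \<in> S \<and> q (v - w n) < inverse (real (Suc n))" for n
  proof -
    obtain u where u: "\<forall>k. u k \<in> S" "(\<lambda>k. q (u k - w n)) \<longlonglongrightarrow> 0"
      using a unfolding qclosure_def by blast
    have "eventually (\<lambda>k. q (u k - w n) < inverse (real (Suc n))) sequentially"
      using u(2) by (intro order_tendstoD) auto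
    then obtain k where "q (u k - w n) < inverse (real (Suc n))"
      by (auto simp: eventually_sequentially)
    thus ?thesis using u(1) by blast
  qed
  then obtain v where v: "\<And>n. v n \<in> S" "\<And>n. q (v n - w n) < inverse (real (Suc n))"
    by metis
  have vE: "v n \<in> E" and wE: "w n \<in> E" for n
    using v(1) S a qclosure_subset_E by blast+
  have le: "q (v n - y) \<le> qconst * (inverse (real (Suc n)) + q (w n - y))" for n
  proof -
    have "q (v n - y) \<le> qconst * (q (v n - w n) + q (w n - y))"
      by (rule q_triangle_diff) (use vE wE a in auto)
    also have "\<dots> \<le> qconst * (inverse (real (Suc n)) + q (w n - y))"
      using v(2)[of n] qconst_ge_1 by (intro mult_left_mono add_right_mono) auto
    finally show ?thesis .
  qed
  have "(\<lambda>n. qconst * (inverse (real (Suc n)) + q (w n - y))) \<longlonglongrightarrow> 0"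
    using a by (intro tendsto_mult_right_zero tendsto_add_zero LIMSEQ_inverse_real_of_nat) auto
  from nonneg_le_tendsto_0[OF _ le this]
  have "(\<lambda>n. q (v n - y)) \<longlonglongrightarrow> 0" using a by (simp add: q_nonneg vE E_diff)
  thus "y \<in> qclosure S" unfolding qclosure_def using v(1) a by blast
qed

lemma closed_subspace_gap:
  assumes M: "V.subspace M" "M \<subseteq> E" "closed_in_qnorm E q M" and v: "v \<in> E" "v \<notin> M"
  obtains d where "d > 0" "\<And>m a. m \<in> M \<Longrightarrow> norm a * d \<le> q (seq_scale sc a v + m)"
proof -
  have "\<exists>d>0. \<forall>m\<in>M. d \<le> q (v - m)"
  proof (rule ccontr)
    assume "\<not> ?thesis"
    hence "\<forall>n. \<exists>m\<in>M. q (v - m) < inverse (real (Suc n))"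
      by (metis not_le of_nat_0_less_iff positive_imp_inverse_positive zero_less_Suc)
    then obtain m where m: "\<And>n. m n \<in> M" "\<And>n. q (v - m n) < inverse (real (Suc n))"
      by metis
    have mE: "m n \<in> E" for n using m(1) M(2) by blast
    have "q (m n - v) \<le> inverse (real (Suc n))" for n
      using m(2)[of n] q_diff_commute[OF mE v(1)] by simp
    from nonneg_le_tendsto_0[OF _ this LIMSEQ_inverse_real_of_nat]
    have "(\<lambda>n. q (m n - v)) \<longlonglongrightarrow> 0" by (simp add: q_nonneg mE v E_diff)
    hence "v \<in> M" using M(3) m(1) v(1) unfolding closed_in_qnorm_def by blast
    thus False using v by blast
  qed
  then obtain d where d: "d > 0" "\<And>m. m \<in> M \<Longrightarrow> d \<le> q (v - m)" by blast
  have "norm a * d \<le> q (seq_scale sc a v + m)" if m: "m \<in> M" for m a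
  proof (cases "a = 0")
    case True
    then show ?thesis using q_nonneg M(2) m by (auto simp: V.scale_zero_left)
  next
    case False
    let ?m' = "- seq_scale sc (inverse a) m"
    have m': "?m' \<in> M" using m M(1) V.subspace_neg V.subspace_scale by blast
    have eq: "seq_scale sc a v + m = seq_scale sc a (v - ?m')"
      using False by (simp add: V.scale_right_distrib)
    have "q (seq_scale sc a v + m) = norm a * q (v - ?m')"
      unfolding eq by (rule q_scale, rule E_diff[OF v(1)]) (use m' M(2) in auto)
    thus ?thesis using d(2)[OF m'] by (simp add: mult_left_mono)
  qed
  with d(1) that show ?thesis by blast
qed

lemma convergent_coeff_off_closed_subspace:
  assumes M: "V.subspace M" "M \<subseteq> E" "closed_in_qnorm E q M" and v: "v \<in> E" "v \<notin> M"
    and m: "\<And>n. m n \<in> M" and conv: "qconv (\<lambda>n. seq_scale sc (b n) v + m n) z"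
  shows "convergent b"
proof -
  let ?u = "\<lambda>n. seq_scale sc (b n) v + m n"
  obtain d where d: "d > 0" "\<And>m a. m \<in> M \<Longrightarrow> norm a * d \<le> q (seq_scale sc a v + m)"
    using closed_subspace_gap[OF M v] by blast
  have uE: "?u n \<in> E" and zE: "z \<in> E" for n using conv by (auto simp: qconv_def)
  have bd: "norm (b n - b k) * d \<le> qconst * (q (?u n - z) + q (?u k - z))" for n k
  proof -
    have "?u n - ?u k = seq_scale sc (b n - b k) v + (m n - m k)"
      by (simp add: V.scale_left_diff_distrib algebra_simps)
    hence "norm (b n - b k) * d \<le> q (?u n - ?u k)"
      using d(2)[of "m n - m k" "b n - b k"] m M(1) V.subspace_diff by metis
    also have "\<dots> \<le> qconst * (q (?u n - z) + q (z - ?u k))"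
      by (rule q_triangle_diff) (use uE zE in auto)
    also have "q (z - ?u k) = q (?u k - z)" using q_diff_commute uE zE by auto
    finally show ?thesis .
  qed
  have "Cauchy b"
  proof (rule CauchyI)
    fix e :: real assume e: "e > 0"
    have "eventually (\<lambda>n. q (?u n - z) < e * d / (2 * qconst)) sequentially"
      using conv e d(1) qconst_ge_1 by (intro order_tendstoD) (auto simp: qconv_def)
    then obtain N where N: "\<And>n. n \<ge> N \<Longrightarrow> q (?u n - z) < e * d / (2 * qconst)"
      by (auto simp: eventually_sequentially)
    have "norm (b n - b k) < e" if "n \<ge> N" "k \<ge> N" for n k
    proof -
      have "norm (b n - b k) * d \<le> qconst * (q (?u n - z) + q (?u k - z))" by (rule bd)
      also have "\<dots> < qconst * (e * d / (2 * qconst) + e * d / (2 * qconst))"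
        using N that qconst_ge_1 by (intro mult_strict_left_mono add_strict_mono) auto
      also have "\<dots> = e * d" using qconst_ge_1 by (simp add: field_simps)
      finally show ?thesis using d(1) by simp
    qed
    thus "\<exists>M. \<forall>m\<ge>M. \<forall>n\<ge>M. norm (b m - b n) < e" by blast
  qed
  thus ?thesis by (simp add: Cauchy_convergent_iff)
qed

lemma closed_span_insert:
  assumes T: "T \<subseteq> E" "closed_in_qnorm E q (V.span T)" and v: "v \<in> E"
  shows "closed_in_qnorm E q (V.span (insert v T))"
proof (cases "v \<in> V.span T")
  case True
  then show ?thesis using T V.span_redundant by simp
next
  case False
  have spanT: "V.subspace (V.span T)" "V.span T \<subseteq> E"
    using V.subspace_span span_subset_E[OF T(1)] by auto
  show ?thesis unfolding closed_in_qnorm_def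
  proof (intro allI impI)
    fix u z assume a: "(\<forall>n. u n \<in> V.span (insert v T)) \<and> z \<in> E \<and> (\<lambda>n. q (u n - z)) \<longlonglongrightarrow> 0"
    hence "\<forall>n. \<exists>k. u n - seq_scale sc k v \<in> V.span T" using V.span_insert by auto
    then obtain b where b: "\<And>n. u n - seq_scale sc (b n) v \<in> V.span T" by metis
    define m where "m n = u n - seq_scale sc (b n) v" for n
    have conv: "qconv u z"
      using a span_subset_E[of "insert v T"] T v unfolding qconv_def by blast
    hence "qconv (\<lambda>n. seq_scale sc (b n) v + m n) z" by (simp add: m_def)
    moreover have mT: "m n \<in> V.span T" for n using b m_def by simp
    ultimately have "convergent b"
      using convergent_coeff_off_closed_subspace[OF spanT T(2) v False] by blast
    then obtain \<beta> where \<beta>: "b \<longlonglongrightarrow> \<beta>" unfolding convergent_def by blast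
    have "qconv (\<lambda>n. seq_scale sc (b n) v) (seq_scale sc \<beta> v)"
      using q_scale_left_tendsto[OF \<beta> v] v E_scale by (simp add: qconv_def)
    from qconv_add[OF conv qconv_scale[OF this, of "-1"]]
    have "qconv m (z - seq_scale sc \<beta> v)"
      by (simp add: m_def[abs_def] V.scale_minus_left)
    hence "z - seq_scale sc \<beta> v \<in> V.span T"
      using T(2) mT unfolding closed_in_qnorm_def qconv_def by blast
    thus "z \<in> V.span (insert v T)" using V.span_insert by auto
  qed
qed

lemma closed_span_finite: "finite S \<Longrightarrow> S \<subseteq> E \<Longrightarrow> closed_in_qnorm E q (V.span S)"
proof (induction S rule: finite_induct)
  case empty
  show ?case unfolding closed_in_qnorm_def
  proof (intro allI impI)
    fix u z assume a: "(\<forall>n. u n \<in> V.span {}) \<and> z \<in> E \<and> (\<lambda>n. q (u n - z)) \<longlonglongrightarrow> 0"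
    hence "u = (\<lambda>n. 0)" by auto
    hence "(\<lambda>n. q (- z)) \<longlonglongrightarrow> 0" using a by simp
    hence "q (- z) = 0" by (simp add: LIMSEQ_const_iff)
    thus "z \<in> V.span {}" using a q_uminus q_eq_0_iff by simp
  qed
next
  case (insert v T)
  then show ?case using closed_span_insert by simp
qed

end

section \<open>Cardinality bounds\<close>

lemma real_seq_lepoll_real: "(UNIV :: (nat \<Rightarrow> real) set) \<lesssim> (UNIV :: real set)"
proof -
  obtain f1 :: "real \<Rightarrow> nat set" where f1: "inj f1"
    using nat_sets_eqpoll_reals eqpoll_sym unfolding eqpoll_def bij_betw_def by blast
  obtain f2 :: "nat set \<Rightarrow> real" where f2: "inj f2"
    using nat_sets_eqpoll_reals unfolding eqpoll_def bij_betw_def by blast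
  define F where "F u = f2 {prod_encode (i, j) | i j. j \<in> f1 (u i)}" for u :: "nat \<Rightarrow> real"
  have "inj F"
  proof (rule injI)
    fix u v assume "F u = F v"
    hence eq: "{prod_encode (i, j) | i j. j \<in> f1 (u i)} = {prod_encode (i, j) | i j. j \<in> f1 (v i)}"
      using f2 unfolding F_def inj_def by blast
    have "j \<in> f1 (u i) \<longleftrightarrow> j \<in> f1 (v i)" for i j
    proof -
      have "j \<in> f1 (u i) \<longleftrightarrow> prod_encode (i, j) \<in> {prod_encode (i, j) | i j. j \<in> f1 (u i)}"
        by (auto simp: prod_encode_eq)
      also have "\<dots> \<longleftrightarrow> prod_encode (i, j) \<in> {prod_encode (i, j) | i j. j \<in> f1 (v i)}"
        using eq by simp
      also have "\<dots> \<longleftrightarrow> j \<in> f1 (v i)" by (auto simp: prod_encode_eq)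
      finally show ?thesis .
    qed
    hence "f1 (u i) = f1 (v i)" for i by blast
    thus "u = v" using f1 by (auto simp: inj_def fun_eq_iff)
  qed
  thus ?thesis unfolding lepoll_def by blast
qed

lemma euclidean_inj_real_seq:
  obtains emb :: "'k::euclidean_space \<Rightarrow> nat \<Rightarrow> real" where "inj emb"
proof -
  obtain xs where xs: "set xs = (Basis :: 'k set)" using finite_list finite_Basis by blast
  define emb where "emb k = (\<lambda>i. if i < length xs then k \<bullet> (xs ! i) else 0)" for k :: 'k
  have "inj emb"
  proof (rule injI)
    fix a b assume "emb a = emb b"
    hence "a \<bullet> (xs ! i) = b \<bullet> (xs ! i)" if "i < length xs" for i
      using that unfolding emb_def by (metis (full_types))
    hence "a \<bullet> v = b \<bullet> v" if "v \<in> Basis" for v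
      using that xs by (metis in_set_conv_nth)
    thus "a = b" by (rule euclidean_eqI)
  qed
  thus ?thesis using that by blast
qed

lemma double_seq_lepoll_real: "(UNIV :: (nat \<Rightarrow> nat \<Rightarrow> 'k::euclidean_space) set) \<lesssim> (UNIV :: real set)"
proof -
  obtain emb :: "'k \<Rightarrow> nat \<Rightarrow> real" where emb: "inj emb" by (rule euclidean_inj_real_seq)
  define H where "H h = (\<lambda>m. case prod_decode m of (n, r) \<Rightarrow>
      case prod_decode r of (i, j) \<Rightarrow> emb (h n i) j)" for h :: "nat \<Rightarrow> nat \<Rightarrow> 'k"
  have "inj H"
  proof (rule injI)
    fix h h' assume eq: "H h = H h'"
    have "emb (h n i) j = emb (h' n i) j" for n i j
      using fun_cong[OF eq, of "prod_encode (n, prod_encode (i, j))"] by (simp add: H_def)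
    hence "h n i = h' n i" for n i using emb by (auto simp: inj_def fun_eq_iff)
    thus "h = h'" by (auto simp: fun_eq_iff)
  qed
  hence "(UNIV :: (nat \<Rightarrow> nat \<Rightarrow> 'k) set) \<lesssim> (UNIV :: (nat \<Rightarrow> real) set)"
    unfolding lepoll_def by blast
  thus ?thesis using real_seq_lepoll_real lepoll_trans by blast
qed

section \<open>The closed span of an independent sequence has dimension continuum\<close>

fun decay_weight :: "(nat \<Rightarrow> real) \<Rightarrow> (nat \<Rightarrow> real) \<Rightarrow> real \<Rightarrow> nat \<Rightarrow> real" where
  "decay_weight d Q C 0 = 1"
| "decay_weight d Q C (Suc k) = decay_weight d Q C k * d k / (2 * C * (1 + Q (Suc k)) * real (Suc k))"

declare decay_weight.simps(2)[simp del]

context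
  fixes d Q :: "nat \<Rightarrow> real" and C :: real
  assumes d: "\<And>n. 0 < d n" "\<And>n. d n \<le> 1" and Q: "\<And>n. 0 \<le> Q n" and C: "1 \<le> C"
begin

lemma decay_weight_pos: "0 < decay_weight d Q C k"
  by (induction k) (use d Q C in \<open>auto simp: decay_weight.simps intro!: divide_pos_pos mult_pos_pos add_pos_nonneg\<close>)

lemma decay_weight_le_1: "decay_weight d Q C k \<le> 1"
proof (induction k)
  case 0
  then show ?case by simp
next
  case (Suc k)
  have "1 \<le> 2 * C * (1 + Q (Suc k)) * real (Suc k)"
  proof -
    have "1 \<le> 2 * C" using C by simp
    also have "\<dots> \<le> 2 * C * (1 + Q (Suc k))" using Q[of "Suc k"] C by simp
    also have "\<dots> \<le> 2 * C * (1 + Q (Suc k)) * real (Suc k)"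
      using mult_left_mono[of 1 "real (Suc k)" "2 * C * (1 + Q (Suc k))"] Q[of "Suc k"] C by simp
    finally show ?thesis .
  qed
  moreover have "x / X \<le> 1" if "1 \<le> X" "x \<le> 1" for x X :: real
    using that by (simp add: divide_le_eq)
  ultimately have "d k / (2 * C * (1 + Q (Suc k)) * real (Suc k)) \<le> 1"
    using d(2)[of k] by blast
  hence "decay_weight d Q C (Suc k) \<le> decay_weight d Q C k"
    using decay_weight_pos[of k]
    by (simp add: decay_weight.simps mult_left_le times_divide_eq_right[symmetric] del: times_divide_eq_right)
  then show ?case using Suc by simp
qed

text \<open>Each weight, inflated by the quasi-triangle constants accumulated along a tail, is at most
  half the previous one; this makes every tail sum of the series defining the witnesses small.\<close>

lemma decay_weight_tail_bound:
  "C ^ (Suc j) * (decay_weight d Q C (Suc m + j) * (1 + Q (Suc m + j))) \<le>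
     decay_weight d Q C m * d m / real (Suc m) * (1/2) ^ (Suc j)"
proof (induction j)
  case 0
  have "C * (w / (2 * C * c * e) * c) = w / e * (1/2)" if "c \<noteq> 0" "e \<noteq> 0" for w c e :: real
    using that C by (simp add: field_simps)
  from this[of "1 + Q (Suc m)" "real (Suc m)" "decay_weight d Q C m * d m"] Q[of "Suc m"]
  show ?case by (simp add: decay_weight.simps(2) del: of_nat_Suc)
next
  case (Suc j)
  let ?k = "Suc m + j"
  have pos: "decay_weight d Q C ?k > 0" by (rule decay_weight_pos)
  have "C ^ Suc (Suc j) * (w * dk / (2 * C * c * e) * c) = C ^ Suc j * w * (dk / (2 * e))"
    if "c \<noteq> 0" "e \<noteq> 0" for w dk c e :: real
    using that C by (simp add: field_simps)
  from this[of "1 + Q (Suc ?k)" "real (Suc ?k)" "decay_weight d Q C ?k" "d ?k"] Q[of "Suc ?k"]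
  have A: "C ^ Suc (Suc j) * (decay_weight d Q C (Suc ?k) * (1 + Q (Suc ?k)))
      = C ^ Suc j * decay_weight d Q C ?k * (d ?k / (2 * real (Suc ?k)))"
    by (simp add: decay_weight.simps(2) del: of_nat_Suc)
  have "d ?k / (2 * real (Suc ?k)) \<le> 1/2" using d[of ?k] by (simp add: field_simps)
  hence "C ^ Suc j * decay_weight d Q C ?k * (d ?k / (2 * real (Suc ?k)))
      \<le> C ^ Suc j * decay_weight d Q C ?k * (1/2)"
    using pos C by (intro mult_left_mono) auto
  also have "\<dots> \<le> C ^ Suc j * (decay_weight d Q C ?k * (1 + Q ?k)) * (1/2)"
    using pos C Q[of ?k] by (simp add: field_simps)
  also have "\<dots> \<le> decay_weight d Q C m * d m / real (Suc m) * (1/2) ^ Suc j * (1/2)"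
    using Suc.IH by (intro mult_right_mono) auto
  finally have "C ^ Suc (Suc j) * (decay_weight d Q C (Suc ?k) * (1 + Q (Suc ?k)))
      \<le> decay_weight d Q C m * d m / real (Suc m) * ((1/2) ^ Suc j * (1/2))"
    unfolding A by (simp only: mult.assoc)
  moreover have "Suc m + Suc j = Suc ?k" "(1/2::real) ^ Suc j * (1/2) = (1/2) ^ Suc (Suc j)" by simp_all
  ultimately show ?case by simp
qed

end

lemma sum_half_powers: "(\<Sum>k\<in>{Suc m..<Suc m + L}. (1/2::real) ^ (k - m)) = 1 - (1/2) ^ L"
proof (induction L)
  case 0
  then show ?case by simp
next
  case (Suc L)
  have "{Suc m..<Suc m + Suc L} = insert (Suc m + L) {Suc m..<Suc m + L}" by auto
  then show ?case using Suc by simp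
qed

lemma tendsto_power_sum_max:
  fixes c :: "real \<Rightarrow> 'a::real_normed_field"
  assumes T: "finite T" "t1 \<in> T" "\<And>t. t \<in> T \<Longrightarrow> 0 < t \<and> t \<le> t1"
  shows "(\<lambda>m. \<Sum>t\<in>T. c t * of_real ((t / t1) ^ m)) \<longlonglongrightarrow> c t1"
proof -
  have "(\<lambda>m. c t * of_real ((t / t1) ^ m)) \<longlonglongrightarrow> c t * (if t = t1 then 1 else 0)" if t: "t \<in> T" for t
  proof (cases "t = t1")
    case True
    then show ?thesis using T(3)[OF T(2)] by simp
  next
    case False
    hence "norm (t / t1) < 1" using T(3)[OF t] T(3)[OF T(2)] by simp
    hence "(\<lambda>m. of_real ((t / t1) ^ m) :: 'a) \<longlonglongrightarrow> of_real 0"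
      by (intro tendsto_of_real LIMSEQ_power_zero)
    hence "(\<lambda>m. c t * of_real ((t / t1) ^ m)) \<longlonglongrightarrow> c t * 0" by (intro tendsto_intros) simp
    then show ?thesis using False by simp
  qed
  hence "(\<lambda>m. \<Sum>t\<in>T. c t * of_real ((t / t1) ^ m)) \<longlonglongrightarrow> (\<Sum>t\<in>T. c t * (if t = t1 then 1 else 0))"
    by (rule tendsto_sum)
  also have "(\<Sum>t\<in>T. c t * (if t = t1 then 1 else 0)) = c t1"
    using T by (simp add: if_distrib sum.delta cong: if_cong)
  finally show ?thesis .
qed

lemma norm_power_sum_le:
  fixes c :: "real \<Rightarrow> 'a::real_normed_field"
  assumes "\<And>t. t \<in> T \<Longrightarrow> 0 \<le> t \<and> t \<le> r"
  shows "norm (\<Sum>t\<in>T. c t * of_real (t ^ k)) \<le> (\<Sum>t\<in>T. norm (c t)) * r ^ k"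
proof -
  have "norm (\<Sum>t\<in>T. c t * of_real (t ^ k)) \<le> (\<Sum>t\<in>T. norm (c t * of_real (t ^ k)))"
    by (rule norm_sum)
  also have "\<dots> \<le> (\<Sum>t\<in>T. norm (c t) * r ^ k)"
  proof (rule sum_mono)
    fix t assume "t \<in> T"
    hence "0 \<le> t" "t \<le> r" using assms by auto
    thus "norm (c t * of_real (t ^ k)) \<le> norm (c t) * r ^ k"
      by (simp add: norm_mult norm_power mult_left_mono power_mono)
  qed
  finally show ?thesis by (simp add: sum_distrib_right)
qed

locale indep_seq = quasi_banach_seq_space +
  fixes g :: "nat \<Rightarrow> nat \<Rightarrow> 'b"
  assumes g_in_E: "\<And>n. g n \<in> E" and g_not_in_span: "\<And>n. g n \<notin> V.span (g ` {..<n})"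
begin

lemma span_g_subset_E: "V.span (g ` A) \<subseteq> E"
  using span_subset_E g_in_E by blast

lemma inj_g: "inj g"
proof (rule injI, rule ccontr)
  have "g i \<noteq> g j" if "i < j" for i j
    using g_not_in_span[of j] V.span_base[of "g i" "g ` {..<j}"] that by auto
  moreover fix m n assume "g m = g n" "m \<noteq> n"
  ultimately show False by (metis linorder_neqE_nat)
qed

definition gap :: "nat \<Rightarrow> real" where
  "gap n = (SOME d. 0 < d \<and> d \<le> 1 \<and>
     (\<forall>m\<in>V.span (g ` {..<n}). \<forall>a. norm a * d \<le> q (seq_scale sc a (g n) + m)))"

lemma gap: "0 < gap n \<and> gap n \<le> 1 \<and>
   (\<forall>m\<in>V.span (g ` {..<n}). \<forall>a. norm a * gap n \<le> q (seq_scale sc a (g n) + m))"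
proof -
  obtain d where d: "d > 0" "\<And>m a. m \<in> V.span (g ` {..<n}) \<Longrightarrow> norm a * d \<le> q (seq_scale sc a (g n) + m)"
    using closed_subspace_gap[OF V.subspace_span span_g_subset_E
        closed_span_finite[OF finite_imageI[OF finite_lessThan]] g_in_E g_not_in_span] g_in_E
    by blast
  have "norm a * min 1 d \<le> q (seq_scale sc a (g n) + m)" if "m \<in> V.span (g ` {..<n})" for m a
    using d(2)[OF that, of a] by (meson min.cobounded2 mult_left_mono norm_ge_zero order_trans)
  hence "\<exists>d. 0 < d \<and> d \<le> 1 \<and>
      (\<forall>m\<in>V.span (g ` {..<n}). \<forall>a. norm a * d \<le> q (seq_scale sc a (g n) + m))"
    using d(1) by (intro exI[of _ "min 1 d"]) auto
  thus ?thesis unfolding gap_def by (rule someI_ex)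
qed

lemma gap_pos: "0 < gap n" and gap_le_1: "gap n \<le> 1"
  and gap_le: "m \<in> V.span (g ` {..<n}) \<Longrightarrow> norm a * gap n \<le> q (seq_scale sc a (g n) + m)"
  using gap by auto

definition weight :: "nat \<Rightarrow> real" where
  "weight = decay_weight gap (\<lambda>n. q (g n)) qconst"

lemma weight_pos: "0 < weight k"
  unfolding weight_def by (rule decay_weight_pos[OF gap_pos gap_le_1 q_nonneg[OF g_in_E] qconst_ge_1])

lemma weight_le_1: "weight k \<le> 1"
  unfolding weight_def by (rule decay_weight_le_1[OF gap_pos gap_le_1 q_nonneg[OF g_in_E] qconst_ge_1])

lemma weight_tail_bound:
  "qconst ^ (Suc j) * (weight (Suc m + j) * (1 + q (g (Suc m + j)))) \<le>
     weight m * gap m / real (Suc m) * (1/2) ^ (Suc j)"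
  unfolding weight_def
  by (rule decay_weight_tail_bound[OF gap_pos gap_le_1 q_nonneg[OF g_in_E] qconst_ge_1])

lemma q_tail_le:
  assumes c: "\<And>k. Suc m \<le> k \<Longrightarrow> norm (c k) \<le> B * weight k" and B: "0 \<le> B"
  shows "q (\<Sum>k\<in>{Suc m..<Suc m + L}. seq_scale sc (c k) (g k)) \<le> B * weight m * gap m / real (Suc m)"
proof -
  let ?R = "weight m * gap m / real (Suc m)"
  have "q (\<Sum>k\<in>{Suc m..<Suc m + L}. seq_scale sc (c k) (g k)) \<le>
      (\<Sum>k\<in>{Suc m..<Suc m + L}. qconst ^ (k - Suc m + 1) * q (seq_scale sc (c k) (g k)))"
    by (rule q_sum_le) (use E_scale g_in_E in auto)
  also have "\<dots> \<le> (\<Sum>k\<in>{Suc m..<Suc m + L}. B * ?R * (1/2) ^ (k - m))"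
  proof (rule sum_mono)
    fix k assume k: "k \<in> {Suc m..<Suc m + L}"
    define j where "j = k - Suc m"
    have kj: "k = Suc m + j" using k j_def by auto
    have "qconst ^ (k - Suc m + 1) * q (seq_scale sc (c k) (g k)) = qconst ^ Suc j * (norm (c k) * q (g k))"
      using q_scale[OF g_in_E] by (simp add: j_def)
    also have "\<dots> \<le> qconst ^ Suc j * (B * weight k * (1 + q (g k)))"
      using c[of k] k q_nonneg[OF g_in_E, of k] qconst_ge_1 B weight_pos[of k]
      by (intro mult_left_mono mult_mono) auto
    also have "\<dots> = B * (qconst ^ Suc j * (weight (Suc m + j) * (1 + q (g (Suc m + j)))))"
      using kj by simp
    also have "\<dots> \<le> B * (?R * (1/2) ^ Suc j)" using weight_tail_bound B by (intro mult_left_mono) auto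
    also have "Suc j = k - m" using kj by simp
    finally show "qconst ^ (k - Suc m + 1) * q (seq_scale sc (c k) (g k)) \<le> B * ?R * (1/2) ^ (k - m)"
      by (simp add: mult_ac)
  qed
  also have "\<dots> = B * ?R * (1 - (1/2) ^ L)"
    by (simp only: sum_distrib_left[symmetric] sum_half_powers)
  also have "\<dots> \<le> B * ?R"
    using B weight_pos[of m] gap_pos[of m] by (intro mult_left_le) (auto intro!: mult_nonneg_nonneg)
  finally show ?thesis by simp
qed

text \<open>If a series in the \<open>g k\<close> converges to \<open>0\<close>, the gap of \<open>g m\<close> to the earlier terms bounds its
  \<open>m\<close>-th coefficient by the tail, which the weights make small.\<close>

lemma coeff_le_of_qconv_0:
  assumes conv: "qconv (\<lambda>N. \<Sum>k<N. seq_scale sc (b k) (g k)) 0"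
    and tail: "\<And>k. Suc m \<le> k \<Longrightarrow> norm (b k) \<le> B * weight k" and B: "0 \<le> B"
  shows "norm (b m) \<le> qconst * B * weight m / real (Suc m)"
proof -
  define s where "s N = (\<Sum>k<N. seq_scale sc (b k) (g k))" for N
  have sE: "s N \<in> E" for N unfolding s_def by (intro E_sum E_scale g_in_E)
  have lim0: "(\<lambda>N. q (s N)) \<longlonglongrightarrow> 0" using conv by (simp add: qconv_def s_def)
  define R where "R = B * weight m * gap m / real (Suc m)"
  have "s (Suc m + L) = s (Suc m) + (\<Sum>k\<in>{Suc m..<Suc m + L}. seq_scale sc (b k) (g k))" for L
    unfolding s_def lessThan_atLeast0 by (rule sum.atLeastLessThan_concat[symmetric]) auto
  hence "q (s (Suc m + L) - s (Suc m)) \<le> R" for L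
    unfolding R_def using q_tail_le[OF tail B] by simp
  hence bnd: "q (s (Suc m)) \<le> qconst * (R + q (s (L + Suc m)))" for L
  proof -
    assume tl: "\<And>L. q (s (Suc m + L) - s (Suc m)) \<le> R"
    have "q (s (Suc m) - 0) \<le> qconst * (q (s (Suc m) - s (Suc m + L)) + q (s (Suc m + L) - 0))"
      by (rule q_triangle_diff) (use sE E_zero in auto)
    also have "q (s (Suc m) - s (Suc m + L)) \<le> R" using tl[of L] q_diff_commute sE by metis
    hence "qconst * (q (s (Suc m) - s (Suc m + L)) + q (s (Suc m + L) - 0))
        \<le> qconst * (R + q (s (Suc m + L) - 0))"
      using qconst_ge_1 by (intro mult_left_mono add_right_mono) auto
    finally show ?thesis by (simp add: add.commute)
  qed
  have "(\<lambda>L. qconst * (R + q (s (L + Suc m)))) \<longlonglongrightarrow> qconst * (R + 0)"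
    by (intro tendsto_intros LIMSEQ_ignore_initial_segment[OF lim0])
  hence "q (s (Suc m)) \<le> qconst * R"
    by (intro tendsto_le[OF sequentially_bot _ tendsto_const]) (use bnd in auto)
  moreover have "norm (b m) * gap m \<le> q (s (Suc m))"
  proof -
    have "s (Suc m) = seq_scale sc (b m) (g m) + s m" unfolding s_def by (simp add: add.commute)
    moreover have "s m \<in> V.span (g ` {..<m})" unfolding s_def
      by (intro V.span_sum V.span_scale V.span_base) auto
    ultimately show ?thesis using gap_le by simp
  qed
  ultimately have "norm (b m) * gap m \<le> (qconst * B * weight m / real (Suc m)) * gap m"
    by (simp add: R_def)
  thus ?thesis using gap_pos[of m] by (rule mult_right_le_imp_le)
qed

end

context indep_seq
begin

definition psum :: "nat \<Rightarrow> real \<Rightarrow> (nat \<Rightarrow> 'b)" where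
  "psum N t = (\<Sum>k<N. seq_scale sc (of_real (weight k * t ^ k)) (g k))"

lemma psum_in_span: "psum N t \<in> V.span (range g)"
  unfolding psum_def by (intro V.span_sum V.span_scale V.span_base) auto

lemma psum_in_E: "psum N t \<in> E"
  using psum_in_span span_g_subset_E by blast

lemma q_psum_diff_le:
  assumes t: "0 \<le> t" "t \<le> 1" and N: "Suc m \<le> N"
  shows "q (psum N t - psum (Suc m) t) \<le> 1 / real (Suc m)"
proof -
  obtain L where L: "N = Suc m + L" using N le_Suc_ex by blast
  have "psum N t = psum (Suc m) t + (\<Sum>k\<in>{Suc m..<Suc m + L}. seq_scale sc (of_real (weight k * t ^ k)) (g k))"
    unfolding psum_def L lessThan_atLeast0 by (rule sum.atLeastLessThan_concat[symmetric]) auto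
  hence diff: "psum N t - psum (Suc m) t = (\<Sum>k\<in>{Suc m..<Suc m + L}. seq_scale sc (of_real (weight k * t ^ k)) (g k))"
    by simp
  have "norm (of_real (weight k * t ^ k) :: 'a) \<le> 1 * weight k" for k
  proof -
    have "norm (of_real (weight k * t ^ k) :: 'a) = weight k * t ^ k"
      by (simp only: norm_of_real) (use weight_pos[of k] t in simp)
    thus ?thesis using weight_pos[of k] t by (simp add: mult_left_le power_le_one)
  qed
  hence "q (psum N t - psum (Suc m) t) \<le> 1 * weight m * gap m / real (Suc m)"
    unfolding diff by (intro q_tail_le) auto
  also have "\<dots> \<le> 1 / real (Suc m)"
    using weight_le_1[of m] gap_le_1[of m] weight_pos[of m] gap_pos[of m]
    by (intro divide_right_mono) (auto simp: mult_le_one)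
  finally show ?thesis .
qed

lemma psum_Cauchy:
  assumes t: "0 \<le> t" "t \<le> 1"
  shows "\<forall>e>0. \<exists>N. \<forall>m\<ge>N. \<forall>n\<ge>N. q (psum m t - psum n t) < e"
proof (intro allI impI)
  fix e :: real assume e: "e > 0"
  obtain M where M: "inverse (real (Suc M)) < e" using reals_Archimedean e by blast
  have le: "q (psum a t - psum b t) < e" if ab: "b \<le> a" "Suc M \<le> b" for a b
  proof -
    obtain m where m: "b = Suc m" using ab by (cases b) auto
    have "q (psum a t - psum b t) \<le> 1 / real (Suc m)"
      unfolding m by (rule q_psum_diff_le) (use t ab m in auto)
    also have "\<dots> \<le> 1 / real (Suc M)" using ab m by (intro divide_left_mono) auto
    also have "\<dots> < e" using M by (simp add: field_simps)
    finally show ?thesis .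
  qed
  have "q (psum a t - psum b t) < e" if "Suc M \<le> a" "Suc M \<le> b" for a b
  proof (cases "b \<le> a")
    case True then show ?thesis using le that by blast
  next
    case False
    hence "q (psum b t - psum a t) < e" using le that by auto
    thus ?thesis using q_diff_commute psum_in_E by metis
  qed
  thus "\<exists>N. \<forall>m\<ge>N. \<forall>n\<ge>N. q (psum m t - psum n t) < e" by blast
qed

definition witness :: "real \<Rightarrow> (nat \<Rightarrow> 'b)" where
  "witness t = (SOME z. qconv (\<lambda>N. psum N t) z)"

lemma qconv_witness:
  assumes "0 \<le> t" "t \<le> 1"
  shows "qconv (\<lambda>N. psum N t) (witness t)"
proof -
  have "\<forall>N. psum N t \<in> E" using psum_in_E by blast
  from q_complete[OF this psum_Cauchy[OF assms]]
  obtain z where "z \<in> E" "(\<lambda>N. q (psum N t - z)) \<longlonglongrightarrow> 0" by blast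
  hence "qconv (\<lambda>N. psum N t) z" using psum_in_E by (simp add: qconv_def)
  thus ?thesis unfolding witness_def by (rule someI[where P = "qconv (\<lambda>N. psum N t)"])
qed

lemma witness_in_qclosure: "0 \<le> t \<Longrightarrow> t \<le> 1 \<Longrightarrow> witness t \<in> qclosure (V.span (range g))"
  using qconv_witness psum_in_span span_g_subset_E
  by (auto simp: qclosure_iff intro!: exI[of _ "\<lambda>N. psum N t"])

lemma sum_scale_psum:
  "(\<Sum>t\<in>T. seq_scale sc (c t) (psum N t)) =
   (\<Sum>k<N. seq_scale sc (of_real (weight k) * (\<Sum>t\<in>T. c t * of_real (t ^ k))) (g k))"
proof -
  have "(\<Sum>t\<in>T. seq_scale sc (c t) (psum N t)) =
      (\<Sum>t\<in>T. \<Sum>k<N. seq_scale sc (c t * of_real (weight k * t ^ k)) (g k))"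
    unfolding psum_def by (simp add: V.scale_sum_right)
  also have "\<dots> = (\<Sum>k<N. \<Sum>t\<in>T. seq_scale sc (c t * of_real (weight k * t ^ k)) (g k))"
    by (rule sum.swap)
  also have "\<dots> = (\<Sum>k<N. seq_scale sc (of_real (weight k) * (\<Sum>t\<in>T. c t * of_real (t ^ k))) (g k))"
    by (simp add: V.scale_sum_left sum_distrib_left of_real_mult mult_ac)
  finally show ?thesis .
qed

text \<open>The coefficient of \<open>g m\<close> in \<open>\<Sum>t c t witness t\<close> is \<open>weight m\<close> times the power sum
  \<open>\<Sum>t c t t\<^sup>m\<close>; if the combination vanishes, every geometric bound \<open>P r\<^sup>m\<close> on these power sums
  improves by a factor \<open>1/(m+1)\<close>.\<close>

lemma power_sum_le_of_combination_eq_0: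
  assumes T: "finite T" "T \<subseteq> {0<..<1}" and comb: "(\<Sum>t\<in>T. seq_scale sc (c t) (witness t)) = 0"
    and bound: "\<And>k. norm (\<Sum>t\<in>T. c t * of_real (t ^ k)) \<le> P * r ^ k" and r: "0 \<le> r" "r \<le> 1"
  shows "norm (\<Sum>t\<in>T. c t * of_real (t ^ m)) \<le> qconst * P / real (Suc m) * r ^ m"
proof -
  define p where "p k = (\<Sum>t\<in>T. c t * of_real (t ^ k))" for k
  have "0 \<le> P * r ^ 0" using bound[of 0] by (rule order_trans[OF norm_ge_zero])
  hence P: "0 \<le> P" by simp
  have "qconv (\<lambda>N. \<Sum>t\<in>T. seq_scale sc (c t) (psum N t)) (\<Sum>t\<in>T. seq_scale sc (c t) (witness t))"
    by (intro qconv_sum qconv_scale qconv_witness T(1)) (use T(2) in auto)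
  hence conv: "qconv (\<lambda>N. \<Sum>k<N. seq_scale sc (of_real (weight k) * p k) (g k)) 0"
    unfolding sum_scale_psum comb p_def .
  have tail: "norm (of_real (weight k) * p k) \<le> (P * r ^ m) * weight k" if "Suc m \<le> k" for k
  proof -
    have "r ^ k \<le> r ^ m" using that r by (intro power_decreasing) auto
    hence "norm (p k) \<le> P * r ^ m" using bound[of k] P unfolding p_def by (meson order_trans mult_left_mono)
    thus ?thesis using weight_pos[of k] by (simp add: norm_mult mult.commute mult_left_mono)
  qed
  have "norm (of_real (weight m) * p m) \<le> qconst * (P * r ^ m) * weight m / real (Suc m)"
    by (rule coeff_le_of_qconv_0[OF conv tail]) (use P r in auto)
  hence "weight m * norm (p m) \<le> weight m * (qconst * P / real (Suc m) * r ^ m)"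
    using weight_pos[of m] by (simp add: norm_mult mult_ac)
  thus ?thesis unfolding p_def by (rule mult_left_le_imp_le[OF _ weight_pos])
qed

text \<open>With \<open>t1\<close> the largest \<open>t\<close> with \<open>c t \<noteq> 0\<close>, the power sums divided by \<open>t1\<^sup>m\<close> tend to \<open>c t1\<close>,
  but by the previous lemma also to \<open>0\<close>.\<close>

lemma witness_combination_eq_0:
  assumes T: "finite T" "T \<subseteq> {0<..<1}" and comb: "(\<Sum>t\<in>T. seq_scale sc (c t) (witness t)) = 0"
  shows "\<forall>t\<in>T. c t = 0"
proof (rule ccontr)
  assume "\<not> (\<forall>t\<in>T. c t = 0)"
  define T' where "T' = {t\<in>T. c t \<noteq> 0}"
  have T': "finite T'" "T' \<noteq> {}" "T' \<subseteq> T"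
    using T \<open>\<not> (\<forall>t\<in>T. c t = 0)\<close> by (auto simp: T'_def)
  define t1 where "t1 = Max T'"
  have t1_in: "t1 \<in> T'" using Max_in[OF T'(1,2)] by (simp add: t1_def)
  have "0 < t \<and> t \<le> t1" if "t \<in> T'" for t
    using Max_ge[OF T'(1) that] T'(3) T(2) that by (auto simp: t1_def)
  moreover have "0 < t1" "t1 < 1" using t1_in T'(3) T(2) by auto
  ultimately have t1: "t1 \<in> T'" "\<And>t. t \<in> T' \<Longrightarrow> 0 < t \<and> t \<le> t1" "0 < t1" "t1 < 1"
    using t1_in by auto
  define p where "p k = (\<Sum>t\<in>T'. c t * of_real (t ^ k))" for k
  have p_T: "p k = (\<Sum>t\<in>T. c t * of_real (t ^ k))" for k
    unfolding p_def T'_def by (rule sum.mono_neutral_left) (use T in auto)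
  define P where "P = (\<Sum>t\<in>T'. norm (c t))"
  have "norm (p k) \<le> P * t1 ^ k" for k
    unfolding p_def P_def by (rule norm_power_sum_le) (use t1(2) less_imp_le in blast)
  hence p_le: "norm (\<Sum>t\<in>T. c t * of_real (t ^ k)) \<le> P * t1 ^ k" for k
    by (simp only: p_T)
  have p_small: "norm (p m) \<le> qconst * P / real (Suc m) * t1 ^ m" for m
    unfolding p_T by (rule power_sum_le_of_combination_eq_0[OF T comb p_le]) (use t1(3,4) in auto)
  have "(\<lambda>m. p m / of_real (t1 ^ m)) \<longlonglongrightarrow> c t1"
  proof -
    have "p m / of_real (t1 ^ m) = (\<Sum>t\<in>T'. c t * of_real ((t / t1) ^ m))" for m
      unfolding p_def using t1(3) by (simp add: sum_divide_distrib power_divide)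
    thus ?thesis using tendsto_power_sum_max[OF T'(1) t1(1,2)] by simp
  qed
  moreover have "(\<lambda>m. p m / of_real (t1 ^ m)) \<longlonglongrightarrow> 0"
  proof (rule Lim_null_comparison)
    show "\<forall>\<^sub>F m in sequentially. norm (p m / of_real (t1 ^ m)) \<le> qconst * P * inverse (real (Suc m))"
    proof (intro always_eventually allI)
      fix m
      have "norm (p m / of_real (t1 ^ m)) = norm (p m) / t1 ^ m"
        using t1(3) by (simp add: norm_divide norm_power)
      also have "\<dots> \<le> (qconst * P / real (Suc m) * t1 ^ m) / t1 ^ m"
        using p_small[of m] t1(3) by (intro divide_right_mono) auto
      also have "\<dots> = qconst * P * inverse (real (Suc m))"
      proof -
        have "t1 ^ m \<noteq> 0" using t1(3) by simp
        thus ?thesis by (simp add: divide_inverse mult.assoc)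
      qed
      finally show "norm (p m / of_real (t1 ^ m)) \<le> qconst * P * inverse (real (Suc m))" .
    qed
    show "(\<lambda>m. qconst * P * inverse (real (Suc m))) \<longlonglongrightarrow> 0"
      by (intro tendsto_mult_right_zero LIMSEQ_inverse_real_of_nat)
  qed
  ultimately have "c t1 = 0" using LIMSEQ_unique by blast
  thus False using t1(1) by (simp add: T'_def)
qed

end

context indep_seq
begin

lemma inj_on_witness: "inj_on witness {0<..<1}"
proof (rule inj_onI, rule ccontr)
  fix s t assume st: "s \<in> {0<..<1}" "t \<in> {0<..<1}" "witness s = witness t" "s \<noteq> t"
  define c where "c r = (if r = s then 1 else - 1 :: 'a)" for r
  have "(\<Sum>r\<in>{s, t}. seq_scale sc (c r) (witness r)) = witness s - witness t"
    using st by (simp add: c_def V.scale_minus_left)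
  also have "\<dots> = 0" using st by simp
  finally have "\<forall>r\<in>{s, t}. c r = 0" by (intro witness_combination_eq_0) (use st in auto)
  thus False by (simp add: c_def)
qed

lemma independent_witnesses: "\<not> V.dependent (witness ` {0<..<1})"
proof
  assume "V.dependent (witness ` {0<..<1})"
  then obtain U u where U: "finite U" "U \<subseteq> witness ` {0<..<1}" "(\<Sum>v\<in>U. seq_scale sc (u v) v) = 0"
    "\<exists>v\<in>U. u v \<noteq> 0"
    unfolding V.dependent_explicit by auto
  define T where "T = {t \<in> {0<..<1}. witness t \<in> U}"
  have TU: "witness ` T = U"
  proof
    show "witness ` T \<subseteq> U" by (auto simp: T_def)
    show "U \<subseteq> witness ` T"
    proof
      fix v assume "v \<in> U"
      then obtain t where "t \<in> {0<..<1}" "v = witness t" using U(2) by blast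
      then show "v \<in> witness ` T" using \<open>v \<in> U\<close> by (auto simp: T_def)
    qed
  qed
  have injT: "inj_on witness T" by (rule inj_on_subset[OF inj_on_witness]) (auto simp: T_def)
  have fT: "finite T" using U(1) TU injT finite_image_iff by blast
  have "(\<Sum>t\<in>T. seq_scale sc (u (witness t)) (witness t)) = (\<Sum>v\<in>U. seq_scale sc (u v) v)"
    unfolding TU[symmetric] by (rule sum.reindex[OF injT, symmetric, unfolded comp_def])
  hence "\<forall>t\<in>T. u (witness t) = 0" using U(3) fT T_def by (intro witness_combination_eq_0) auto
  thus False using U(4) TU by auto
qed

text \<open>Finite combinations of the \<open>g k\<close>, encoded by a scalar sequence whose first term
  gives the length of the combination.\<close>

definition combination :: "(nat \<Rightarrow> 'a) \<Rightarrow> (nat \<Rightarrow> 'b)" where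
  "combination a = (\<Sum>k<nat \<lfloor>norm (a 0)\<rfloor>. seq_scale sc (a (Suc k)) (g k))"

lemma span_subset_range_combination: "V.span (range g) \<subseteq> range combination"
proof
  fix x assume "x \<in> V.span (range g)"
  then obtain t r where tr: "x = (\<Sum>v\<in>t. seq_scale sc (r v) v)" "finite t" "t \<subseteq> range g"
    unfolding V.span_explicit by blast
  obtain C where C: "finite C" "t = g ` C" using finite_subset_image[OF tr(2,3)] by blast
  obtain N where N: "C \<subseteq> {..<N}" using finite_nat_bounded[OF C(1)] by blast
  define r' where "r' v = (if v \<in> t then r v else 0)" for v
  have "x = (\<Sum>v\<in>g ` {..<N}. seq_scale sc (r' v) v)"
    unfolding tr(1) r'_def
    by (rule sum.mono_neutral_cong_left) (use C N in \<open>auto simp: V.scale_zero_left\<close>)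
  also have "\<dots> = (\<Sum>k<N. seq_scale sc (r' (g k)) (g k))"
    by (subst sum.reindex) (use inj_g in \<open>auto intro: inj_on_subset\<close>)
  also have "\<dots> = combination (\<lambda>i. if i = 0 then of_nat N else r' (g (i - 1)))"
    unfolding combination_def by (simp add: norm_of_nat)
  finally show "x \<in> range combination" by blast
qed

lemma qclosure_span_lepoll_real: "qclosure (V.span (range g)) \<lesssim> (UNIV :: real set)"
proof -
  define lim where "lim h = (THE y. qconv (\<lambda>n. combination (h n)) y)" for h
  have "qclosure (V.span (range g)) \<subseteq> range lim"
  proof
    fix y assume "y \<in> qclosure (V.span (range g))"
    then obtain u where u: "\<forall>n. u n \<in> V.span (range g)" "qconv u y"
      using span_g_subset_E by (auto simp: qclosure_iff)
    have "\<forall>n. \<exists>a. u n = combination a" using u(1) span_subset_range_combination by blast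
    then obtain h where h: "\<And>n. u n = combination (h n)" by metis
    have conv: "qconv (\<lambda>n. combination (h n)) y" using u(2) h by (metis (no_types, lifting) ext)
    have "lim h = y" unfolding lim_def
    proof (rule the_equality)
      show "qconv (\<lambda>n. combination (h n)) y" by (rule conv)
      thus "\<And>w. qconv (\<lambda>n. combination (h n)) w \<Longrightarrow> w = y" using qconv_unique by blast
    qed
    thus "y \<in> range lim" by blast
  qed
  hence "qclosure (V.span (range g)) \<lesssim> range lim" by (rule subset_imp_lepoll)
  also have "range lim \<lesssim> (UNIV :: (nat \<Rightarrow> nat \<Rightarrow> 'a) set)" by (rule image_lepoll)
  also have "\<dots> \<lesssim> (UNIV :: real set)" by (rule double_seq_lepoll_real)
  finally show ?thesis .
qed

lemma dim_continuum_qclosure_span: "dim_continuum (seq_scale sc) (qclosure (V.span (range g)))"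
proof -
  let ?W = "qclosure (V.span (range g))" and ?Z = "witness ` {0<..<1}"
  have sub: "V.subspace ?W" using subspace_qclosure V.subspace_span span_g_subset_E by blast
  have ZW: "?Z \<subseteq> ?W" using witness_in_qclosure by auto
  obtain B where B: "?Z \<subseteq> B" "B \<subseteq> ?W" "\<not> V.dependent B" "?W \<subseteq> V.span B"
    using V.maximal_independent_subset_extend[OF ZW independent_witnesses] by blast
  have "V.span B = ?W" using B V.span_minimal[OF B(2) sub] by blast
  moreover have "B \<approx> (UNIV :: real set)"
  proof (rule lepoll_antisym)
    show "B \<lesssim> (UNIV :: real set)"
      using subset_imp_lepoll[OF B(2)] qclosure_span_lepoll_real lepoll_trans by blast
    have "(UNIV :: real set) \<lesssim> {0<..<1::real}"
      using open_interval_eqpoll_reals[of 0 1] eqpoll_sym eqpoll_imp_lepoll by auto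
    also have "{0<..<1::real} \<lesssim> ?Z" unfolding lepoll_def using inj_on_witness by blast
    also have "?Z \<lesssim> B" using B(1) by (rule subset_imp_lepoll)
    finally show "(UNIV :: real set) \<lesssim> B" .
  qed
  ultimately show ?thesis unfolding dim_continuum_def using B(3) by blast
qed

end

section \<open>Zero-free versions and strongly invariant spaces\<close>

lemma strict_mono_eq_if_range_eq:
  fixes f h :: "nat \<Rightarrow> nat"
  assumes f: "strict_mono f" and h: "strict_mono h" and r: "range f = range h"
  shows "f = h"
proof
  fix n show "f n = h n"
  proof (induction n rule: less_induct)
    case (less n)
    obtain m where m: "f n = h m" using r by (metis rangeI imageE)
    obtain m' where m': "h n = f m'" using r by (metis rangeI imageE)
    show ?case
    proof (rule ccontr)
      assume ne: "f n \<noteq> h n"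
      show False
      proof (cases "f n < h n")
        case True
        hence "h m < h n" using m by simp
        hence "m < n" using h by (simp add: strict_mono_less)
        hence "f m = h m" using less by blast
        hence "f m = f n" using m by simp
        hence "m = n" using f strict_mono_eq by blast
        thus False using \<open>m < n\<close> by simp
      next
        case False
        hence "f m' < f n" using m' ne by simp
        hence "m' < n" using f by (simp add: strict_mono_less)
        hence "f m' = h m'" using less by blast
        hence "h m' = h n" using m' by simp
        hence "m' = n" using h strict_mono_eq by blast
        thus False using \<open>m' < n\<close> by simp
      qed
    qed
  qed
qed

lemma enumerate_image_strict_mono:
  fixes r :: "nat \<Rightarrow> nat"
  assumes r: "strict_mono r" and A: "infinite A"
  shows "enumerate (r ` A) = r \<circ> enumerate A"
proof (rule strict_mono_eq_if_range_eq)
  have rA: "infinite (r ` A)"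
    using A r strict_mono_imp_inj_on finite_imageD by (metis inj_on_subset subset_UNIV)
  show "strict_mono (enumerate (r ` A))" using rA by (rule strict_mono_enumerate)
  show "strict_mono (r \<circ> enumerate A)" using r strict_mono_enumerate[OF A]
    by (simp add: strict_mono_def)
  show "range (enumerate (r ` A)) = range (r \<circ> enumerate A)"
    by (metis image_comp range_enumerate[OF rA] range_enumerate[OF A])
qed

lemma zero_free_comp_strict_mono:
  fixes w :: "nat \<Rightarrow> 'b::zero"
  assumes r: "strict_mono r" and off: "\<And>j. j \<notin> range r \<Longrightarrow> w j = 0"
  shows "zero_free w = zero_free (w \<circ> r)"
proof -
  let ?Sw = "{j. w j \<noteq> 0}" and ?Sr = "{k. w (r k) \<noteq> 0}"
  have img: "?Sw = r ` ?Sr"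
  proof (rule set_eqI)
    fix j show "j \<in> ?Sw \<longleftrightarrow> j \<in> r ` ?Sr"
    proof
      assume j: "j \<in> ?Sw"
      then obtain k where "j = r k" using off by blast
      then show "j \<in> r ` ?Sr" using j by auto
    qed auto
  qed
  have fin: "finite ?Sw \<longleftrightarrow> finite ?Sr" unfolding img
    using r strict_mono_imp_inj_on finite_image_iff by (metis inj_on_subset subset_UNIV)
  show ?thesis
  proof (cases "finite ?Sr")
    case True
    then show ?thesis using fin unfolding zero_free_def by simp
  next
    case False
    have "enumerate ?Sw = r \<circ> enumerate ?Sr" unfolding img by (rule enumerate_image_strict_mono[OF r False])
    then show ?thesis using fin False unfolding zero_free_def by (simp add: fun_eq_iff)
  qed
qed

lemma zero_free_neq_0:
  fixes w :: "nat \<Rightarrow> 'b::zero"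
  assumes "infinite {j. w j \<noteq> 0}"
  shows "zero_free w \<noteq> 0"
proof -
  have "zero_free w 0 = w (enumerate {j. w j \<noteq> 0} 0)" using assms by (simp add: zero_free_def)
  also have "\<dots> \<noteq> 0" using enumerate_in_set[OF assms] by simp
  finally show ?thesis by (metis zero_fun_apply)
qed

lemma invariant_in_iff_zero_free_in:
  "invariant_seq_space sc F qF \<Longrightarrow> zero_free x \<noteq> 0 \<Longrightarrow> x \<in> F \<longleftrightarrow> zero_free x \<in> F"
  unfolding invariant_seq_space_def by blast

lemma strongly_invariant_add:
  assumes "scalar_structure sc" "strongly_invariant_seq_space sc F qF" "x \<in> F" "y \<in> F"
  shows "x + y \<in> F"
proof -
  interpret vector_space "seq_scale sc" by (rule vector_space_seq_scale[OF assms(1)])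
  have "subspace F"
    using assms(2) by (simp add: strongly_invariant_seq_space_def invariant_seq_space_def quasi_banach_seq_def)
  thus ?thesis using assms(3,4) subspace_add by blast
qed

lemma strongly_invariant_comp:
  "strongly_invariant_seq_space sc F qF \<Longrightarrow> x \<in> F \<Longrightarrow> strict_mono r \<Longrightarrow> x \<circ> r \<in> F"
  unfolding strongly_invariant_seq_space_def by blast

lemma strongly_invariant_finite_support:
  "strongly_invariant_seq_space sc F qF \<Longrightarrow> finite {j. x j \<noteq> 0} \<Longrightarrow> x \<in> F"
  unfolding strongly_invariant_seq_space_def c00_def by blast

lemma strongly_invariant_if_comp:
  assumes F: "strongly_invariant_seq_space sc F qF" and r: "strict_mono r"
    and off: "\<And>j. j \<notin> range r \<Longrightarrow> w j = 0" and wr: "w \<circ> r \<in> F"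
  shows "w \<in> F"
proof (cases "finite {j. w j \<noteq> 0}")
  case True
  then show ?thesis using strongly_invariant_finite_support[OF F] by blast
next
  case False
  have inv: "invariant_seq_space sc F qF" using F by (simp add: strongly_invariant_seq_space_def)
  have "zero_free w \<noteq> 0" using False by (rule zero_free_neq_0)
  moreover have "zero_free w = zero_free (w \<circ> r)" by (rule zero_free_comp_strict_mono[OF r off])
  ultimately show ?thesis
    using invariant_in_iff_zero_free_in[OF inv] invariant_in_iff_zero_free_in[OF inv, of "w \<circ> r"] wr
    by simp
qed

lemma strongly_invariant_if_comp_interleave:
  assumes sc: "scalar_structure sc" and F: "strongly_invariant_seq_space sc F qF"
    and r: "strict_mono r1" "strict_mono r2" "\<And>k k'. r1 k \<noteq> r2 k'"
    and off: "\<And>j. j \<notin> range r1 \<union> range r2 \<Longrightarrow> w j = 0"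
    and wr: "w \<circ> r1 \<in> F" "w \<circ> r2 \<in> F"
  shows "w \<in> F"
proof -
  define w1 where "w1 j = (if j \<in> range r1 then w j else 0)" for j
  define w2 where "w2 j = (if j \<in> range r2 then w j else 0)" for j
  have "w1 \<in> F" using strongly_invariant_if_comp[OF F r(1), of w1] wr(1) by (auto simp: w1_def comp_def)
  moreover have "w2 \<in> F" using strongly_invariant_if_comp[OF F r(2), of w2] wr(2) by (auto simp: w2_def comp_def)
  moreover have "w = w1 + w2" using off r(3) by (auto simp: w1_def w2_def fun_eq_iff)
  ultimately show ?thesis using strongly_invariant_add[OF sc F] by simp
qed

context quasi_banach_seq_space
begin

lemma qclosure_span_indep_seq:
  fixes g :: "nat \<Rightarrow> nat \<Rightarrow> 'a"
  assumes "\<And>n. g n \<in> E" "\<And>n. g n \<notin> V.span (g ` {..<n})"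
  shows "V.subspace (qclosure (V.span (range g)))" "closed_in_qnorm E q (qclosure (V.span (range g)))"
    "dim_continuum (seq_scale sc) (qclosure (V.span (range g)))" "range g \<subseteq> qclosure (V.span (range g))"
proof -
  interpret indep_seq sc E q g by unfold_locales (use assms in auto)
  show "V.subspace (qclosure (V.span (range g)))"
    using subspace_qclosure V.subspace_span span_g_subset_E by blast
  show "closed_in_qnorm E q (qclosure (V.span (range g)))"
    using closed_qclosure span_g_subset_E by blast
  show "dim_continuum (seq_scale sc) (qclosure (V.span (range g)))"
    by (rule dim_continuum_qclosure_span)
  show "range g \<subseteq> qclosure (V.span (range g))"
    using subset_qclosure[OF span_g_subset_E] V.span_base by blast
qed

end

locale invariant_space = quasi_banach_seq_space +
  assumes invariant: "invariant_seq_space sc E q"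
begin

lemma norm_coord_le: "x \<in> E \<Longrightarrow> norm (x j) \<le> q x"
  and infinite_dim_E: "infinite_dim (seq_scale sc) E"
  using invariant by (simp_all add: invariant_seq_space_def)

lemma in_E_iff_zero_free_in_E: "zero_free x \<noteq> 0 \<Longrightarrow> x \<in> E \<longleftrightarrow> zero_free x \<in> E"
  by (rule invariant_in_iff_zero_free_in[OF invariant])

lemma qconv_coord: "qconv u z \<Longrightarrow> (\<lambda>n. u n j) \<longlonglongrightarrow> z j"
proof -
  assume a: "qconv u z"
  hence E: "\<And>n. u n \<in> E" "z \<in> E" by (auto simp: qconv_def)
  have "(\<lambda>n. norm (u n j - z j)) \<longlonglongrightarrow> 0"
    apply (rule nonneg_le_tendsto_0[of _ "\<lambda>n. q (u n - z)"])
    using a norm_coord_le[OF E_diff[OF E(1) E(2)], of _ j] by (auto simp: qconv_def)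
  thus ?thesis by (simp add: LIM_zero_cancel tendsto_norm_zero_iff)
qed

lemma not_in_span_prefix_if_independent:
  fixes g :: "nat \<Rightarrow> nat \<Rightarrow> 'b"
  assumes B: "\<not> V.dependent B" and g: "inj g" "range g \<subseteq> B"
  shows "g n \<notin> V.span (g ` {..<n})"
proof -
  have "insert (g n) (g ` {..<n}) \<subseteq> B" using g(2) by auto
  hence "\<not> V.dependent (insert (g n) (g ` {..<n}))" using B V.dependent_mono by blast
  moreover have "g n \<notin> g ` {..<n}" by (auto simp: inj_eq[OF g(1)])
  ultimately show ?thesis using V.independent_insert by auto
qed

text \<open>Extend \<open>x\<close> to a Hamel basis of the infinite-dimensional space \<open>E\<close> and take the closed span of
  countably many basis vectors, starting with \<open>x\<close>.\<close>

lemma closed_continuum_subspace_through: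
  assumes x: "x \<in> E"
  obtains W where "V.subspace W" "W \<subseteq> E" "closed_in_qnorm E q W" "dim_continuum (seq_scale sc) W" "x \<in> W"
proof -
  define S0 where "S0 = (if x = 0 then {} else {x})"
  have "S0 \<subseteq> E" "\<not> V.dependent S0" using x V.independent_empty by (auto simp: S0_def)
  then obtain B where B: "S0 \<subseteq> B" "B \<subseteq> E" "\<not> V.dependent B" "E \<subseteq> V.span B"
    using V.maximal_independent_subset_extend by blast
  have "infinite B"
  proof
    assume "finite B"
    moreover have "V.span B = E" using B span_subset_E by blast
    ultimately show False using infinite_dim_E B(2) unfolding infinite_dim_def by blast
  qed
  hence "infinite (B - {x})" by simp
  then obtain h :: "nat \<Rightarrow> _" where h: "inj h" "range h \<subseteq> B - {x}"
    using infinite_countable_subset by blast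
  define g where "g = (if x = 0 then h else case_nat x h)"
  have "h k \<noteq> x" for k using h(2) by auto
  hence "inj g" "range g \<subseteq> B"
    using h B(1) by (auto simp: g_def S0_def inj_def image_subset_iff split: nat.splits)
  hence gE: "g n \<in> E" and gind: "g n \<notin> V.span (g ` {..<n})" for n
    using B(2,3) not_in_span_prefix_if_independent by blast+
  note W = qclosure_span_indep_seq[OF gE gind]
  have "x \<in> qclosure (V.span (range g))"
  proof (cases "x = 0")
    case True then show ?thesis using W(1) V.subspace_0 by blast
  next
    case False
    hence "x = g 0" by (simp add: g_def)
    then show ?thesis using W(4) by blast
  qed
  thus ?thesis by (rule that[OF W(1) qclosure_subset_E W(2,3)])
qed

end

section \<open>Spaceability\<close>

lemma interleaved_enumeration:
  fixes S :: "nat set"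
  assumes S: "infinite S"
  obtains r1 r2 :: "nat \<Rightarrow> nat"
  where "strict_mono r1" "strict_mono r2" "\<forall>k k'. r1 k \<noteq> r2 k'" "range r1 \<union> range r2 = S"
proof -
  define \<sigma> where "\<sigma> = enumerate S"
  have \<sigma>: "strict_mono \<sigma>" "range \<sigma> = S"
    using strict_mono_enumerate[OF S] range_enumerate[OF S] by (auto simp: \<sigma>_def)
  define r1 where "r1 = \<sigma> \<circ> (\<lambda>k. 2 * k)"
  define r2 where "r2 = \<sigma> \<circ> (\<lambda>k. 2 * k + 1)"
  have "strict_mono r1" "strict_mono r2"
    using \<sigma>(1) by (simp_all add: r1_def r2_def strict_mono_def)
  moreover have "r1 k \<noteq> r2 k'" for k k'
  proof
    assume "r1 k = r2 k'"
    hence "2 * k = 2 * k' + 1" using strict_mono_eq[OF \<sigma>(1)] by (simp add: r1_def r2_def)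
    thus False by presburger
  qed
  moreover have "range r1 \<union> range r2 = \<sigma> ` (range (\<lambda>k. 2 * k) \<union> range (\<lambda>k. 2 * k + 1))"
    by (simp add: r1_def r2_def image_Un image_comp)
  moreover have "range (\<lambda>k::nat. 2 * k) \<union> range (\<lambda>k. 2 * k + 1) = UNIV"
    by (auto simp: image_iff) presburger
  ultimately show ?thesis using that \<sigma>(2) by simp
qed

text \<open>Halving the support: if \<open>v\<close> lies in no \<open>E\<^sub>\<lambda>\<close>, then neither does its restriction to one of
  two interleaved halves of the support, since otherwise both restrictions would lie in the larger
  of two nested spaces, and then so would \<open>v\<close>.\<close>

lemma escaping_subsequence:
  fixes Es :: "'g \<Rightarrow> (nat \<Rightarrow> 'c::banach) set" and v :: "nat \<Rightarrow> 'c"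
  assumes sc: "scalar_structure scY" and si: "\<forall>l\<in>\<Gamma>. strongly_invariant_seq_space scY (Es l) (qs l)"
    and nest: "nested \<Gamma> Es" and S: "infinite S" and off: "\<forall>j. j \<notin> S \<longrightarrow> v j = 0"
    and v: "\<forall>l\<in>\<Gamma>. v \<notin> Es l"
  obtains \<tau> \<rho> :: "nat \<Rightarrow> nat" where "strict_mono \<tau>" "strict_mono \<rho>" "\<forall>k k'. \<tau> k \<noteq> \<rho> k'"
    "range \<tau> \<subseteq> S" "\<forall>l\<in>\<Gamma>. v \<circ> \<tau> \<notin> Es l"
proof -
  obtain r1 r2 :: "nat \<Rightarrow> nat" where r: "strict_mono r1" "strict_mono r2"
    and disj: "\<forall>k k'. r1 k \<noteq> r2 k'" and ranges: "range r1 \<union> range r2 = S"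
    by (rule interleaved_enumeration[OF S])
  have "(\<forall>l\<in>\<Gamma>. v \<circ> r1 \<notin> Es l) \<or> (\<forall>l\<in>\<Gamma>. v \<circ> r2 \<notin> Es l)"
  proof (rule ccontr)
    assume "\<not> ?thesis"
    then obtain l1 l2 where l: "l1 \<in> \<Gamma>" "l2 \<in> \<Gamma>" "v \<circ> r1 \<in> Es l1" "v \<circ> r2 \<in> Es l2" by blast
    then obtain l where l: "l \<in> \<Gamma>" "v \<circ> r1 \<in> Es l" "v \<circ> r2 \<in> Es l"
      using nest unfolding nested_def by blast
    have F: "strongly_invariant_seq_space scY (Es l) (qs l)" using si l(1) by blast
    have "v \<in> Es l"
      using strongly_invariant_if_comp_interleave[OF sc F r, where w = v] disj off ranges l(2,3) by blast
    thus False using v l(1) by blast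
  qed
  then show ?thesis
  proof
    assume "\<forall>l\<in>\<Gamma>. v \<circ> r1 \<notin> Es l"
    then show ?thesis using that[OF r disj] ranges by blast
  next
    assume "\<forall>l\<in>\<Gamma>. v \<circ> r2 \<notin> Es l"
    moreover have "\<forall>k k'. r2 k \<noteq> r1 k'" using disj by metis
    ultimately show ?thesis using that[OF r(2,1)] ranges by blast
  qed
qed

locale support_split = invariant_space +
  fixes x :: "nat \<Rightarrow> 'b" and \<tau> \<rho> :: "nat \<Rightarrow> nat"
  assumes x_in_E: "x \<in> E" and infinite_support: "infinite {j. x j \<noteq> 0}"
    and \<tau>: "strict_mono \<tau>" and \<rho>: "strict_mono \<rho>" and \<tau>_neq_\<rho>: "\<And>k k'. \<tau> k \<noteq> \<rho> k'"
    and x_\<tau>: "\<And>k. x (\<tau> k) \<noteq> 0"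
begin

definition \<sigma> :: "nat \<Rightarrow> nat" where
  "\<sigma> = enumerate {j. x j \<noteq> 0}"

lemma \<sigma>: "strict_mono \<sigma>" "range \<sigma> = {j. x j \<noteq> 0}"
  using strict_mono_enumerate[OF infinite_support] range_enumerate[OF infinite_support]
  by (auto simp: \<sigma>_def)

lemma x_\<sigma>: "x (\<sigma> k) \<noteq> 0" and x_off_\<sigma>: "j \<notin> range \<sigma> \<Longrightarrow> x j = 0"
  using \<sigma>(2) by blast+

definition \<nu> :: "nat \<Rightarrow> nat \<Rightarrow> nat" where
  "\<nu> i k = \<rho> (prod_encode (i, k))"

lemma strict_mono_\<nu>: "strict_mono (\<nu> i)"
proof -
  have "strict_mono (\<lambda>k. prod_encode (i, k))"
    unfolding strict_mono_Suc_iff prod_encode_def by simp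
  thus ?thesis using \<rho> unfolding \<nu>_def strict_mono_def by simp
qed

lemma \<nu>_eq_iff: "\<nu> i k = \<nu> i' k' \<longleftrightarrow> i = i' \<and> k = k'"
  using strict_mono_eq[OF \<rho>] prod_encode_eq unfolding \<nu>_def by auto

lemma \<tau>_neq_\<nu>: "\<tau> k \<noteq> \<nu> i k'"
  unfolding \<nu>_def using \<tau>_neq_\<rho> by blast

definition copy :: "nat \<Rightarrow> nat \<Rightarrow> 'b" where
  "copy i j = (if j \<in> range (\<nu> i) then x (\<sigma> (inv (\<nu> i) j)) else 0)"

lemma copy_\<nu>: "copy i (\<nu> i k) = x (\<sigma> k)"
  using strict_mono_imp_inj_on[OF strict_mono_\<nu>[of i]] by (simp add: copy_def inv_f_f)

lemma copy_off: "j \<notin> range (\<nu> i) \<Longrightarrow> copy i j = 0"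
  by (simp add: copy_def)

lemma copy_in_E: "copy i \<in> E"
proof -
  have "zero_free (copy i) = zero_free (copy i \<circ> \<nu> i)"
    by (rule zero_free_comp_strict_mono[OF strict_mono_\<nu>]) (use copy_off in auto)
  also have "copy i \<circ> \<nu> i = x \<circ> \<sigma>" using copy_\<nu> by (auto simp: fun_eq_iff)
  also have "zero_free (x \<circ> \<sigma>) = zero_free x"
    by (rule zero_free_comp_strict_mono[OF \<sigma>(1), symmetric]) (use x_off_\<sigma> in auto)
  finally have "zero_free (copy i) = zero_free x" .
  moreover have "zero_free x \<noteq> 0" using infinite_support by (rule zero_free_neq_0)
  ultimately show ?thesis using in_E_iff_zero_free_in_E x_in_E by metis
qed

definition gen :: "nat \<Rightarrow> nat \<Rightarrow> 'b" where
  "gen n = (if n = 0 then x else copy (n - 1))"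

lemma gen_in_E: "gen n \<in> E"
  using x_in_E copy_in_E by (simp add: gen_def)

text \<open>On \<open>\<tau>\<close> and on \<open>\<nu> i\<close> every earlier \<open>gen m\<close> is the same multiple of \<open>x\<close>, while \<open>copy i\<close> vanishes
  on \<open>\<tau>\<close> but not on \<open>\<nu> i\<close>.\<close>

lemma gen_not_in_span: "gen n \<notin> V.span (gen ` {..<n})"
proof (cases n)
  case 0 then show ?thesis using x_\<sigma>[of 0] by (auto simp: gen_def)
next
  case (Suc i)
  define A where "A = {y. \<exists>b. \<forall>j\<in>range \<tau> \<union> range (\<nu> i). y j = sc b (x j)}"
  have "gen ` {..<n} \<subseteq> A"
  proof
    fix y assume "y \<in> gen ` {..<n}"
    then obtain m where m: "m < n" "y = gen m" by blast
    show "y \<in> A"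
    proof (cases m)
      case 0
      then show ?thesis using m unfolding A_def gen_def by (intro CollectI exI[of _ 1]) simp
    next
      case (Suc i')
      hence "j \<notin> range (\<nu> i')" if "j \<in> range \<tau> \<union> range (\<nu> i)" for j
        using that \<tau>_neq_\<nu>[THEN not_sym] \<nu>_eq_iff m \<open>n = Suc i\<close> by auto
      then show ?thesis using m Suc copy_off unfolding A_def gen_def
        by (intro CollectI exI[of _ 0]) (simp add: S.scale_zero_left)
    qed
  qed
  hence "V.span (gen ` {..<n}) \<subseteq> A" unfolding A_def by (rule V.span_minimal[OF _ subspace_proportional])
  moreover have "copy i \<notin> A"
  proof
    assume "copy i \<in> A"
    then obtain b where b: "\<forall>j\<in>range \<tau> \<union> range (\<nu> i). copy i j = sc b (x j)"
      unfolding A_def by blast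
    have "copy i (\<tau> 0) = 0" using copy_off \<tau>_neq_\<nu> by (metis imageE)
    hence "b = 0" using b x_\<tau>[of 0] by (simp add: S.scale_eq_0_iff)
    thus False using b copy_\<nu>[of i 0] x_\<sigma>[of 0] by (simp add: S.scale_zero_left)
  qed
  ultimately show ?thesis using Suc by (auto simp: gen_def)
qed

definition structured :: "(nat \<Rightarrow> 'b) set" where
  "structured = {y \<in> E. \<exists>b a. (\<forall>j. (\<forall>i. j \<notin> range (\<nu> i)) \<longrightarrow> y j = sc b (x j)) \<and>
     (\<forall>i k. y (\<nu> i k) = sc b (x (\<nu> i k)) + sc (a i) (x (\<sigma> k)))}"

lemma structured_subset_E: "structured \<subseteq> E"
  unfolding structured_def by blast

lemma subspace_structured: "V.subspace structured"
proof (rule V.subspaceI)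
  show "0 \<in> structured" unfolding structured_def using E_zero
    by (intro CollectI conjI exI[of _ 0] exI[of _ "\<lambda>_. 0"]) (auto simp: S.scale_zero_left)
next
  fix y y' assume "y \<in> structured" "y' \<in> structured"
  then obtain b a b' a' where "y \<in> E" "y' \<in> E" "\<forall>j. (\<forall>i. j \<notin> range (\<nu> i)) \<longrightarrow> y j = sc b (x j)"
    "\<forall>i k. y (\<nu> i k) = sc b (x (\<nu> i k)) + sc (a i) (x (\<sigma> k))"
    "\<forall>j. (\<forall>i. j \<notin> range (\<nu> i)) \<longrightarrow> y' j = sc b' (x j)"
    "\<forall>i k. y' (\<nu> i k) = sc b' (x (\<nu> i k)) + sc (a' i) (x (\<sigma> k))"
    unfolding structured_def by blast
  thus "y + y' \<in> structured" unfolding structured_def using E_add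
    by (intro CollectI conjI exI[of _ "b + b'"] exI[of _ "\<lambda>i. a i + a' i"])
       (auto simp: S.scale_left_distrib algebra_simps)
next
  fix c y assume "y \<in> structured"
  then obtain b a where "y \<in> E" "\<forall>j. (\<forall>i. j \<notin> range (\<nu> i)) \<longrightarrow> y j = sc b (x j)"
    "\<forall>i k. y (\<nu> i k) = sc b (x (\<nu> i k)) + sc (a i) (x (\<sigma> k))"
    unfolding structured_def by blast
  thus "seq_scale sc c y \<in> structured" unfolding structured_def using E_scale
    by (intro CollectI conjI exI[of _ "c * b"] exI[of _ "\<lambda>i. c * a i"])
       (auto simp: seq_scale_apply S.scale_right_distrib)
qed

lemma range_gen_subset_structured: "range gen \<subseteq> structured"
proof
  fix y assume "y \<in> range gen"
  then obtain n where n: "y = gen n" by blast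
  show "y \<in> structured"
  proof (cases n)
    case 0
    then show ?thesis using n x_in_E unfolding structured_def gen_def
      by (intro CollectI conjI exI[of _ 1] exI[of _ "\<lambda>_. 0"]) (auto simp: S.scale_zero_left)
  next
    case (Suc i')
    have "copy i' (\<nu> i k) = sc 0 (x (\<nu> i k)) + sc (if i = i' then 1 else 0) (x (\<sigma> k))" for i k
    proof (cases "i = i'")
      case True then show ?thesis using copy_\<nu> by (simp add: S.scale_zero_left)
    next
      case False
      hence "\<nu> i k \<notin> range (\<nu> i')" using \<nu>_eq_iff by auto
      then show ?thesis using False copy_off by (simp add: S.scale_zero_left)
    qed
    moreover have "(\<forall>i. j \<notin> range (\<nu> i)) \<longrightarrow> copy i' j = sc 0 (x j)" for j
      using copy_off by (auto simp: S.scale_zero_left)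
    ultimately show ?thesis using n Suc copy_in_E unfolding structured_def gen_def
      by (intro CollectI conjI exI[of _ 0] exI[of _ "\<lambda>i. if i = i' then 1 else 0"]) auto
  qed
qed

end

context support_split
begin

text \<open>Coordinatewise limits: \<open>b\<close> is read off at \<open>\<tau> 0\<close>, each \<open>a i\<close> at \<open>\<nu> i 0\<close>.\<close>

lemma closed_structured: "closed_in_qnorm E q structured"
  unfolding closed_in_qnorm_def
proof (intro allI impI)
  fix u z assume a: "(\<forall>n. u n \<in> structured) \<and> z \<in> E \<and> (\<lambda>n. q (u n - z)) \<longlonglongrightarrow> 0"
  have coord: "(\<lambda>n. u n j) \<longlonglongrightarrow> z j" for j
    using a structured_subset_E by (intro qconv_coord) (auto simp: qconv_def)
  have "\<forall>n. \<exists>b a. (\<forall>j. (\<forall>i. j \<notin> range (\<nu> i)) \<longrightarrow> u n j = sc b (x j)) \<and>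
      (\<forall>i k. u n (\<nu> i k) = sc b (x (\<nu> i k)) + sc (a i) (x (\<sigma> k)))"
    using a unfolding structured_def by blast
  then obtain b c where bc: "\<And>n j. (\<forall>i. j \<notin> range (\<nu> i)) \<Longrightarrow> u n j = sc (b n) (x j)"
    "\<And>n i k. u n (\<nu> i k) = sc (b n) (x (\<nu> i k)) + sc (c n i) (x (\<sigma> k))" by metis
  have off_\<tau>: "\<forall>i. \<tau> 0 \<notin> range (\<nu> i)" using \<tau>_neq_\<nu> by (metis imageE)
  have "(\<lambda>n. sc (b n) (x (\<tau> 0))) \<longlonglongrightarrow> z (\<tau> 0)" using coord[of "\<tau> 0"] bc(1)[OF off_\<tau>] by simp
  then obtain \<beta> where \<beta>: "b \<longlonglongrightarrow> \<beta>" using tendsto_scale_left_cancel[OF x_\<tau>[of 0]] by blast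
  have off: "z j = sc \<beta> (x j)" if "\<forall>i. j \<notin> range (\<nu> i)" for j
    using tendsto_scale_left[OF \<beta>, of "x j"] coord[of j] bc(1)[OF that] LIMSEQ_unique by auto
  have "\<exists>\<alpha>. (\<lambda>n. c n i) \<longlonglongrightarrow> \<alpha>" for i
  proof -
    have "(\<lambda>n. u n (\<nu> i 0) - sc (b n) (x (\<nu> i 0))) \<longlonglongrightarrow> z (\<nu> i 0) - sc \<beta> (x (\<nu> i 0))"
      by (intro tendsto_diff coord tendsto_scale_left[OF \<beta>])
    hence "(\<lambda>n. sc (c n i) (x (\<sigma> 0))) \<longlonglongrightarrow> z (\<nu> i 0) - sc \<beta> (x (\<nu> i 0))" using bc(2) by simp
    from tendsto_scale_left_cancel[OF x_\<sigma> this] show ?thesis by blast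
  qed
  then obtain \<alpha> where \<alpha>: "\<And>i. (\<lambda>n. c n i) \<longlonglongrightarrow> \<alpha> i" by metis
  have on: "z (\<nu> i k) = sc \<beta> (x (\<nu> i k)) + sc (\<alpha> i) (x (\<sigma> k))" for i k
  proof -
    have "(\<lambda>n. u n (\<nu> i k)) \<longlonglongrightarrow> sc \<beta> (x (\<nu> i k)) + sc (\<alpha> i) (x (\<sigma> k))"
      unfolding bc(2) by (intro tendsto_add tendsto_scale_left[OF \<beta>] tendsto_scale_left[OF \<alpha>])
    thus ?thesis using coord LIMSEQ_unique by blast
  qed
  show "z \<in> structured" unfolding structured_def using a off on by blast
qed

text \<open>A nonzero element is \<open>b x\<close> along \<open>\<tau>\<close>; if \<open>b = 0\<close>, it is \<open>a\<^sub>i (x \<circ> \<sigma>)\<close> along some \<open>\<nu> i\<close> with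
  \<open>a\<^sub>i \<noteq> 0\<close>. Compatibility of \<open>f\<close> transfers non-membership from \<open>f \<circ> x \<circ> \<tau>\<close>, resp.
  \<open>f \<circ> x \<circ> \<sigma>\<close>, to these subsequences, and strong invariance to the element itself.\<close>

lemma structured_subset_G_set:
  fixes scY :: "'a \<Rightarrow> 'c::banach \<Rightarrow> 'c" and Es :: "'g \<Rightarrow> (nat \<Rightarrow> 'c) set" and f :: "'b \<Rightarrow> 'c"
  assumes si: "\<forall>l\<in>\<Gamma>. strongly_invariant_seq_space scY (Es l) (qs l)"
    and compat: "\<forall>l\<in>\<Gamma>. compatible sc f (Es l)" and f0: "f 0 = 0"
    and fx: "(\<lambda>j. f (x j)) \<notin> (\<Union>l\<in>\<Gamma>. Es l)" and fx\<tau>: "\<And>l. l \<in> \<Gamma> \<Longrightarrow> (\<lambda>k. f (x (\<tau> k))) \<notin> Es l"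
  shows "structured \<subseteq> G_set E f \<Gamma> Es \<union> {0}"
proof
  fix y assume y: "y \<in> structured"
  then obtain b a where ba: "y \<in> E" "\<forall>j. (\<forall>i. j \<notin> range (\<nu> i)) \<longrightarrow> y j = sc b (x j)"
    "\<forall>i k. y (\<nu> i k) = sc b (x (\<nu> i k)) + sc (a i) (x (\<sigma> k))" unfolding structured_def by blast
  have off_\<tau>: "\<forall>i. \<tau> k \<notin> range (\<nu> i)" for k using \<tau>_neq_\<nu> by (metis imageE)
  have "(\<lambda>j. f (y j)) \<notin> Es l" if l: "l \<in> \<Gamma>" and "y \<noteq> 0" for l
  proof
    assume fy: "(\<lambda>j. f (y j)) \<in> Es l"
    have F: "strongly_invariant_seq_space scY (Es l) (qs l)" using si l by blast
    have cp: "\<And>xs a. a \<noteq> 0 \<Longrightarrow> (\<lambda>j. f (xs j)) \<notin> Es l \<Longrightarrow> (\<lambda>j. f (sc a (xs j))) \<notin> Es l"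
      using compat l unfolding compatible_def by blast
    show False
    proof (cases "b = 0")
      case False
      have "(\<lambda>j. f (y j)) \<circ> \<tau> = (\<lambda>k. f (sc b (x (\<tau> k))))" using ba(2) off_\<tau> by auto
      thus False using cp[OF False fx\<tau>[OF l]] strongly_invariant_comp[OF F fy \<tau>] by simp
    next
      case True
      obtain j where j: "y j \<noteq> 0" using \<open>y \<noteq> 0\<close> by (auto simp: fun_eq_iff)
      have "\<not> (\<forall>i. j \<notin> range (\<nu> i))"
      proof
        assume "\<forall>i. j \<notin> range (\<nu> i)"
        hence "y j = sc b (x j)" using ba(2) by blast
        thus False using j True by (simp add: S.scale_zero_left)
      qed
      then obtain i k where "j = \<nu> i k" by blast
      hence ai: "a i \<noteq> 0" using j ba(3) True by (auto simp: S.scale_zero_left)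
      have "(\<lambda>k. f (x (\<sigma> k))) \<notin> Es l"
      proof
        assume "(\<lambda>k. f (x (\<sigma> k))) \<in> Es l"
        hence "(\<lambda>j. f (x j)) \<in> Es l"
          using strongly_invariant_if_comp[OF F \<sigma>(1), of "\<lambda>j. f (x j)"] x_off_\<sigma> f0 by (auto simp: comp_def)
        thus False using fx l by blast
      qed
      hence "(\<lambda>k. f (sc (a i) (x (\<sigma> k)))) \<notin> Es l" by (rule cp[OF ai])
      moreover have "(\<lambda>j. f (y j)) \<circ> \<nu> i = (\<lambda>k. f (sc (a i) (x (\<sigma> k))))"
        using ba(3) True by (auto simp: S.scale_zero_left)
      ultimately show False using strongly_invariant_comp[OF F fy strict_mono_\<nu>[of i]] by simp
    qed
  qed
  thus "y \<in> G_set E f \<Gamma> Es \<union> {0}" using ba(1) unfolding G_set_def by blast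
qed

lemma closed_continuum_subspace_in_structured:
  obtains W where "V.subspace W" "W \<subseteq> E" "closed_in_qnorm E q W" "dim_continuum (seq_scale sc) W"
    "x \<in> W" "W \<subseteq> structured"
proof
  let ?W = "qclosure (V.span (range gen))"
  note W = qclosure_span_indep_seq[OF gen_in_E gen_not_in_span]
  show "V.subspace ?W" "closed_in_qnorm E q ?W" "dim_continuum (seq_scale sc) ?W" by (fact W)+
  show "?W \<subseteq> E" by (rule qclosure_subset_E)
  show "x \<in> ?W" using W(4) by (metis gen_def rangeI subsetD)
  show "?W \<subseteq> structured"
    using qclosure_minimal[OF closed_structured] V.span_minimal[OF range_gen_subset_structured subspace_structured]
    by blast
qed

end

context invariant_space
begin

lemma closed_continuum_subspace_in_G_set:
  fixes scY :: "'a \<Rightarrow> 'c::banach \<Rightarrow> 'c" and Es :: "'g \<Rightarrow> (nat \<Rightarrow> 'c) set" and f :: "'b \<Rightarrow> 'c"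
  assumes scY: "scalar_structure scY" and si: "\<forall>l\<in>\<Gamma>. strongly_invariant_seq_space scY (Es l) (qs l)"
    and compat: "\<forall>l\<in>\<Gamma>. compatible sc f (Es l)" and nest: "nested \<Gamma> Es" and \<Gamma>: "\<Gamma> \<noteq> {}"
    and xG: "x \<in> G_set E f \<Gamma> Es"
  obtains W where "V.subspace W" "W \<subseteq> E" "closed_in_qnorm E q W" "dim_continuum (seq_scale sc) W"
    "x \<in> W" "W \<subseteq> G_set E f \<Gamma> Es \<union> {0}"
proof -
  obtain l0 where l0: "l0 \<in> \<Gamma>" using \<Gamma> by blast
  have f0: "f 0 = 0" using compat l0 unfolding compatible_def by blast
  have xE: "x \<in> E" and fx: "(\<lambda>j. f (x j)) \<notin> (\<Union>l\<in>\<Gamma>. Es l)" using xG by (auto simp: G_set_def)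
  have "infinite {j. f (x j) \<noteq> 0}"
    using strongly_invariant_finite_support[of scY "Es l0" "qs l0" "\<lambda>j. f (x j)"] si fx l0 by blast
  moreover have "{j. f (x j) \<noteq> 0} \<subseteq> {j. x j \<noteq> 0}" using f0 by auto
  ultimately have S: "infinite {j. x j \<noteq> 0}" using infinite_super by blast
  have off: "\<forall>j. j \<notin> {j. x j \<noteq> 0} \<longrightarrow> f (x j) = 0" using f0 by auto
  have fx': "\<forall>l\<in>\<Gamma>. (\<lambda>j. f (x j)) \<notin> Es l" using fx by auto
  obtain \<tau> \<rho> :: "nat \<Rightarrow> nat" where \<tau>\<rho>: "strict_mono \<tau>" "strict_mono \<rho>" "\<forall>k k'. \<tau> k \<noteq> \<rho> k'"
    "range \<tau> \<subseteq> {j. x j \<noteq> 0}" "\<forall>l\<in>\<Gamma>. (\<lambda>j. f (x j)) \<circ> \<tau> \<notin> Es l"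
    by (rule escaping_subsequence[OF scY si nest S off fx'])
  interpret support_split sc E q x \<tau> \<rho>
    using xE S \<tau>\<rho>(1-4) by unfold_locales (auto simp: image_subset_iff)
  have G: "structured \<subseteq> G_set E f \<Gamma> Es \<union> {0}"
    by (rule structured_subset_G_set[OF si compat f0 fx]) (use \<tau>\<rho>(5) in \<open>simp add: comp_def\<close>)
  obtain W where W: "V.subspace W" "W \<subseteq> E" "closed_in_qnorm E q W" "dim_continuum (seq_scale sc) W"
    "x \<in> W" "W \<subseteq> structured"
    by (rule closed_continuum_subspace_in_structured)
  show ?thesis by (rule that[OF W(1-5)]) (use W(6) G in blast)
qed

end

theorem mainTheorem2:
  fixes scX :: "'k::{real_normed_field, euclidean_space} \<Rightarrow> 'a::banach \<Rightarrow> 'a"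
    and scY :: "'k \<Rightarrow> 'b::banach \<Rightarrow> 'b"
    and E :: "(nat \<Rightarrow> 'a) set" and q :: "(nat \<Rightarrow> 'a) \<Rightarrow> real"
    and \<Gamma> :: "'g set"
    and Es :: "'g \<Rightarrow> (nat \<Rightarrow> 'b) set" and qs :: "'g \<Rightarrow> (nat \<Rightarrow> 'b) \<Rightarrow> real"
    and f :: "'a \<Rightarrow> 'b"
  assumes "scalar_structure scX" and "scalar_structure scY"
    and "invariant_seq_space scX E q"
    and "\<forall>l\<in>\<Gamma>. strongly_invariant_seq_space scY (Es l) (qs l)"
    and "\<forall>l\<in>\<Gamma>. compatible scX f (Es l)"
    and "nested \<Gamma> Es"
  shows "G_set E f \<Gamma> Es = {} \<or> pointwise_c_spaceable scX E q (G_set E f \<Gamma> Es)"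
proof -
  interpret invariant_space scX E q
    using assms(1,3) by unfold_locales (simp_all add: invariant_seq_space_def)
  have "\<exists>W. W \<subseteq> E \<and> V.subspace W \<and> closed_in_qnorm E q W \<and> dim_continuum (seq_scale scX) W \<and>
      x \<in> W \<and> W \<subseteq> G_set E f \<Gamma> Es \<union> {0}" if x: "x \<in> G_set E f \<Gamma> Es" for x
  proof (cases "\<Gamma> = {}")
    case True
    hence G: "G_set E f \<Gamma> Es = E" by (auto simp: G_set_def)
    with x obtain W where "V.subspace W" "W \<subseteq> E" "closed_in_qnorm E q W"
      "dim_continuum (seq_scale scX) W" "x \<in> W"
      using closed_continuum_subspace_through by blast
    with G show ?thesis by blast
  next
    case False
    obtain W where "V.subspace W" "W \<subseteq> E" "closed_in_qnorm E q W" "dim_continuum (seq_scale scX) W"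
      "x \<in> W" "W \<subseteq> G_set E f \<Gamma> Es \<union> {0}"
      by (rule closed_continuum_subspace_in_G_set[OF assms(2,4,5,6) False x])
    thus ?thesis by blast
  qed
  thus ?thesis unfolding pointwise_c_spaceable_def by blast
qed

end
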